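(* Let $\Bbbk$ be an algebraically closed field of characteristic zero, $G$ a finite group, $\chi:G\to\Bbbk^\times$ a linear character with $\chi^n=1$, $g\in Z(G)$ with $g^n\neq 1$, where $n\geq 2$ is the multiplicative order of $\chi(g)$. Let $H$ be the $\Bbbk$-algebra generated by $\Bbbk G$ and $z$ with relations $z^n=g^n-1$ and $zs=\chi(s)sz$ for $s\in G$. Then for every $j\in\Lambda_1$, the annihilator ideal in $H$ of the $H$-module $P_j$ is $$\Big(\sum_{i\in\Lambda_0}e_i+\sum_{j'\in\Lambda_1\setminus\mathbf{Orb}(j)}e_{j'}\Big).$$
   Context: Let $\chi_0,\dots,\chi_{p-1}$ be the irreducible characters of $G$, $V_i$ a simple $\Bbbk G$-module with character $\chi_i$, and $e_i=\frac{\chi_i(1)}{|G|}\sum_{h\in G}\chi_i(h)h^{-1}$. The central element $g^n$ acts on $V_i$ by a scalar $\lambda_i$; $\Lambda_0=\{i:\lambda_i=1\}$, $\Lambda_1=\{i:\lambda_i\neq 1\}$. The permutation $\tau$ of the indices is defined by $\chi^{-1}\chi_i=\chi_{\tau(i)}$, and $\mathbf{Orb}(j)=\{j,\tau(j),\dots,\tau^{n-1}(j)\}$. For $j\in\Lambda_1$, $P_j=V_j\oplus xV_j\oplus\cdots\oplus x^{n-1}V_j$ (formal copies of $V_j$) with $s\cdot(x^lv)=\chi^{-l}(s)x^l(s\cdot v)$ for $s\in G$, $z\cdot(x^lv)=x^{l+1}v$ for $0\leq l\leq n-2$, and $z\cdot(x^{n-1}v)=(\lambda_j-1)v$. $(a)$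 denotes the two-sided ideal of $H$ generated by $a$. *)

theory Defs
  imports "HOL-Algebra.Group" "HOL-Computational_Algebra.Polynomial" "Jordan_Normal_Form.Matrix" "HOL-Library.Function_Algebras"
begin

definition alg_closed_field :: "'k::field itself \<Rightarrow> bool" where
  "alg_closed_field _ \<longleftrightarrow> (\<forall>p :: 'k poly. degree p \<noteq> 0 \<longrightarrow> (\<exists>x. poly p x = 0))"

definition is_rep :: "('g, 'b) monoid_scheme \<Rightarrow> nat \<Rightarrow> ('g \<Rightarrow> 'k::field mat) \<Rightarrow> bool" where
  "is_rep G d \<rho> \<longleftrightarrow> (\<forall>s\<in>carrier G. \<rho> s \<in> carrier_mat d d) \<and> \<rho> \<one>\<^bsub>G\<^esub> = 1\<^sub>m d \<and>
     (\<forall>s\<in>carrier G. \<forall>t\<in>carrier G. \<rho> (s \<otimes>\<^bsub>G\<^esub> t) = \<rho> s * \<rho> t)"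

definition invariant_subspace :: "('g, 'b) monoid_scheme \<Rightarrow> nat \<Rightarrow> ('g \<Rightarrow> 'k::field mat) \<Rightarrow> 'k vec set \<Rightarrow> bool" where
  "invariant_subspace G d \<rho> W \<longleftrightarrow> W \<subseteq> carrier_vec d \<and> 0\<^sub>v d \<in> W \<and>
     (\<forall>v\<in>W. \<forall>w\<in>W. v + w \<in> W) \<and> (\<forall>c. \<forall>v\<in>W. c \<cdot>\<^sub>v v \<in> W) \<and>
     (\<forall>s\<in>carrier G. \<forall>v\<in>W. \<rho> s *\<^sub>v v \<in> W)"

definition irr_rep :: "('g, 'b) monoid_scheme \<Rightarrow> nat \<Rightarrow> ('g \<Rightarrow> 'k::field mat) \<Rightarrow> bool" where
  "irr_rep G d \<rho> \<longleftrightarrow> is_rep G d \<rho> \<and> d > 0 \<and>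
     (\<forall>W. invariant_subspace G d \<rho> W \<longrightarrow> W = {0\<^sub>v d} \<or> W = carrier_vec d)"

definition mat_trace :: "nat \<Rightarrow> 'k::field mat \<Rightarrow> 'k" where
  "mat_trace d A = (\<Sum>i<d. A $$ (i, i))"

definition char_of :: "('g, 'b) monoid_scheme \<Rightarrow> nat \<Rightarrow> ('g \<Rightarrow> 'k::field mat) \<Rightarrow> 'g \<Rightarrow> 'k" where
  "char_of G d \<rho> = (\<lambda>s. if s \<in> carrier G then mat_trace d (\<rho> s) else 0)"

definition Irr :: "('g, 'b) monoid_scheme \<Rightarrow> ('g \<Rightarrow> 'k::field) set" where
  "Irr G = {char_of G d \<rho> | d \<rho>. irr_rep G d \<rho>}"

(* the scalar by which the central element g^n acts *)
definition gn_scalar :: "('g, 'b) monoid_scheme \<Rightarrow> 'g \<Rightarrow> nat \<Rightarrow> nat \<Rightarrow> ('g \<Rightarrow> 'k::field mat) \<Rightarrow> 'k" where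
  "gn_scalar G g n d \<rho> = (THE c. \<rho> (g [^]\<^bsub>G\<^esub> n) = c \<cdot>\<^sub>m 1\<^sub>m d)"

definition Lambda0 :: "('g, 'b) monoid_scheme \<Rightarrow> 'g \<Rightarrow> nat \<Rightarrow> ('g \<Rightarrow> 'k::field) set" where
  "Lambda0 G g n = {\<psi> \<in> Irr G. \<exists>d \<rho>. irr_rep G d \<rho> \<and> char_of G d \<rho> = \<psi> \<and> gn_scalar G g n d \<rho> = 1}"

definition Lambda1 :: "('g, 'b) monoid_scheme \<Rightarrow> 'g \<Rightarrow> nat \<Rightarrow> ('g \<Rightarrow> 'k::field) set" where
  "Lambda1 G g n = {\<psi> \<in> Irr G. \<exists>d \<rho>. irr_rep G d \<rho> \<and> char_of G d \<rho> = \<psi> \<and> gn_scalar G g n d \<rho> \<noteq> 1}"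

definition Orb :: "('g \<Rightarrow> 'k::field) \<Rightarrow> nat \<Rightarrow> ('g \<Rightarrow> 'k) \<Rightarrow> ('g \<Rightarrow> 'k) set" where
  "Orb \<chi> n \<psi> = {(\<lambda>s. (inverse (\<chi> s)) ^ l * \<psi> s) | l. l < n}"

(* The algebra H, realised on its basis {s z^l : s in G, 0 <= l < n}:
   an element h is the coefficient function h s l of s z^l. *)
definition Hcar :: "('g, 'b) monoid_scheme \<Rightarrow> nat \<Rightarrow> ('g \<Rightarrow> nat \<Rightarrow> 'k::field) set" where
  "Hcar G n = {h. \<forall>s l. (s \<notin> carrier G \<or> n \<le> l) \<longrightarrow> h s l = 0}"

definition Hbasis :: "'g \<Rightarrow> nat \<Rightarrow> 'g \<Rightarrow> nat \<Rightarrow> 'k::field" where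
  "Hbasis s l = (\<lambda>u m. if u = s \<and> m = l then 1 else 0)"

(* (s z^a)(t z^b) = chi(t)^a s t z^(a+b), using z^n = g^n - 1 *)
definition Hbasis_prod :: "('g, 'b) monoid_scheme \<Rightarrow> ('g \<Rightarrow> 'k::field) \<Rightarrow> 'g \<Rightarrow> nat
     \<Rightarrow> 'g \<Rightarrow> nat \<Rightarrow> 'g \<Rightarrow> nat \<Rightarrow> 'g \<Rightarrow> nat \<Rightarrow> 'k" where
  "Hbasis_prod G \<chi> g n s a t b =
     (if a + b < n then (\<lambda>u m. \<chi> t ^ a * Hbasis (s \<otimes>\<^bsub>G\<^esub> t) (a + b) u m)
      else (\<lambda>u m. \<chi> t ^ a * (Hbasis (s \<otimes>\<^bsub>G\<^esub> t \<otimes>\<^bsub>G\<^esub> (g [^]\<^bsub>G\<^esub> n)) (a + b - n) u m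
                              - Hbasis (s \<otimes>\<^bsub>G\<^esub> t) (a + b - n) u m)))"

definition Hmul :: "('g, 'b) monoid_scheme \<Rightarrow> ('g \<Rightarrow> 'k::field) \<Rightarrow> 'g \<Rightarrow> nat
     \<Rightarrow> ('g \<Rightarrow> nat \<Rightarrow> 'k) \<Rightarrow> ('g \<Rightarrow> nat \<Rightarrow> 'k) \<Rightarrow> ('g \<Rightarrow> nat \<Rightarrow> 'k)" where
  "Hmul G \<chi> g n x y = (\<lambda>u m. \<Sum>s\<in>carrier G. \<Sum>a<n. \<Sum>t\<in>carrier G. \<Sum>b<n.
       x s a * y t b * Hbasis_prod G \<chi> g n s a t b u m)"

inductive_set ideal_gen :: "('g, 'b) monoid_scheme \<Rightarrow> ('g \<Rightarrow> 'k::field) \<Rightarrow> 'g \<Rightarrow> nat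
     \<Rightarrow> ('g \<Rightarrow> nat \<Rightarrow> 'k) \<Rightarrow> ('g \<Rightarrow> nat \<Rightarrow> 'k) set"
  for G \<chi> g n a where
    gen: "a \<in> ideal_gen G \<chi> g n a"
  | zero: "0 \<in> ideal_gen G \<chi> g n a"
  | add: "x \<in> ideal_gen G \<chi> g n a \<Longrightarrow> y \<in> ideal_gen G \<chi> g n a \<Longrightarrow> x + y \<in> ideal_gen G \<chi> g n a"
  | lmul: "h \<in> Hcar G n \<Longrightarrow> x \<in> ideal_gen G \<chi> g n a \<Longrightarrow> Hmul G \<chi> g n h x \<in> ideal_gen G \<chi> g n a"
  | rmul: "h \<in> Hcar G n \<Longrightarrow> x \<in> ideal_gen G \<chi> g n a \<Longrightarrow> Hmul G \<chi> g n x h \<in> ideal_gen G \<chi> g n a"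

definition e_idem :: "('g, 'b) monoid_scheme \<Rightarrow> ('g \<Rightarrow> 'k::field) \<Rightarrow> 'g \<Rightarrow> nat \<Rightarrow> 'k" where
  "e_idem G \<psi> = (\<lambda>s l. if s \<in> carrier G \<and> l = 0
       then \<psi> \<one>\<^bsub>G\<^esub> / of_nat (card (carrier G)) * \<psi> (inv\<^bsub>G\<^esub> s) else 0)"

(* The module P = V + xV + ... + x^{n-1}V with V = k^d; an element w has
   w l i = i-th coordinate of the x^l-component. *)
definition Pcar :: "nat \<Rightarrow> nat \<Rightarrow> (nat \<Rightarrow> nat \<Rightarrow> 'k::field) set" where
  "Pcar n d = {w. \<forall>l i. (n \<le> l \<or> d \<le> i) \<longrightarrow> w l i = 0}"

definition P_z_act :: "nat \<Rightarrow> nat \<Rightarrow> 'k::field \<Rightarrow> (nat \<Rightarrow> nat \<Rightarrow> 'k) \<Rightarrow> (nat \<Rightarrow> nat \<Rightarrow> 'k)" where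
  "P_z_act n d lam w = (\<lambda>l i. if i < d then
      (if l = 0 then (lam - 1) * w (n - 1) i else if l < n then w (l - 1) i else 0) else 0)"

definition P_g_act :: "('g \<Rightarrow> 'k::field) \<Rightarrow> nat \<Rightarrow> nat \<Rightarrow> ('g \<Rightarrow> 'k mat) \<Rightarrow> 'g
     \<Rightarrow> (nat \<Rightarrow> nat \<Rightarrow> 'k) \<Rightarrow> (nat \<Rightarrow> nat \<Rightarrow> 'k)" where
  "P_g_act \<chi> n d \<rho> s w = (\<lambda>l i. if l < n \<and> i < d then
      (inverse (\<chi> s)) ^ l * (\<Sum>k<d. \<rho> s $$ (i, k) * w l k) else 0)"

definition P_act :: "('g, 'b) monoid_scheme \<Rightarrow> ('g \<Rightarrow> 'k::field) \<Rightarrow> nat \<Rightarrow> nat \<Rightarrow> ('g \<Rightarrow> 'k mat)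
     \<Rightarrow> 'k \<Rightarrow> ('g \<Rightarrow> nat \<Rightarrow> 'k) \<Rightarrow> (nat \<Rightarrow> nat \<Rightarrow> 'k) \<Rightarrow> (nat \<Rightarrow> nat \<Rightarrow> 'k)" where
  "P_act G \<chi> n d \<rho> lam h w = (\<lambda>l i. \<Sum>s\<in>carrier G. \<Sum>m<n.
       h s m * P_g_act \<chi> n d \<rho> s ((P_z_act n d lam ^^ m) w) l i)"

definition annihilator :: "('g, 'b) monoid_scheme \<Rightarrow> ('g \<Rightarrow> 'k::field) \<Rightarrow> nat \<Rightarrow> nat \<Rightarrow> ('g \<Rightarrow> 'k mat)
     \<Rightarrow> 'k \<Rightarrow> ('g \<Rightarrow> nat \<Rightarrow> 'k) set" where
  "annihilator G \<chi> n d \<rho> lam = {h \<in> Hcar G n. \<forall>w \<in> Pcar n d. P_act G \<chi> n d \<rho> lam h w = 0}"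

end

theory Submission
  imports Defs "Jordan_Normal_Form.Char_Poly"
begin

text \<open>As a \<open>\<Bbbk>G\<close>-module, \<open>P\<^sub>j = \<Oplus>\<^sub>l x\<^sup>l V\<^sub>j\<close> and \<open>x\<^sup>l V\<^sub>j\<close> is the simple module with character
  \<open>\<chi>\<^sup>-\<^sup>l \<chi>\<^sub>j\<close>, so the central idempotent \<open>e\<^sub>i\<close> kills \<open>P\<^sub>j\<close> exactly when \<open>i \<notin> Orb(j)\<close>. As
  \<open>Orb(j) \<subseteq> \<Lambda>\<^sub>1\<close>, the generator in the statement is \<open>E = \<Sum>\<^bsub>i \<notin> Orb(j)\<^esub> e\<^sub>i\<close>, so \<open>(E)\<close> annihilates
  \<open>P\<^sub>j\<close>. Conversely, let \<open>h = \<Sum>\<^sub>m h\<^sub>m z\<^sup>m\<close> (\<open>h\<^sub>m \<in> \<Bbbk>G\<close>) annihilate \<open>P\<^sub>j\<close>. Applying \<open>h\<close> to a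
  vector of a single degree shows that every \<open>h\<^sub>m\<close> acts as zero on every \<open>x\<^sup>l V\<^sub>j\<close>, i.e.
  \<open>e\<^sub>i h\<^sub>m = 0\<close> for \<open>i \<in> Orb(j)\<close>; with \<open>\<Sum>\<^sub>i e\<^sub>i = 1\<close> this gives \<open>h\<^sub>m = E h\<^sub>m\<close>, hence \<open>h = E h \<in> (E)\<close>.\<close>

lemma index_mult_mat_sum:
  assumes "A \<in> carrier_mat n m" "B \<in> carrier_mat m p" "i < n" "j < p"
  shows "(A * B) $$ (i, j) = (\<Sum>k<m. A $$ (i, k) * B $$ (k, j))"
  using assms by (auto simp: scalar_prod_def lessThan_atLeast0 intro!: sum.cong)

lemma index_mult_mat_vec_sum:
  assumes "A \<in> carrier_mat n m" "v \<in> carrier_vec m" "i < n"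
  shows "(A *\<^sub>v v) $ i = (\<Sum>k<m. A $$ (i, k) * v $ k)"
  using assms by (auto simp: scalar_prod_def lessThan_atLeast0 intro!: sum.cong)

lemma eq_mat_on_unit_vecsI:
  fixes A :: "'a::semiring_1 mat"
  assumes A: "A \<in> carrier_mat n m" and B: "B \<in> carrier_mat n m"
    and eq: "\<And>j. j < m \<Longrightarrow> A *\<^sub>v unit_vec m j = B *\<^sub>v unit_vec m j"
  shows "A = B"
proof (rule eq_matI)
  fix i j assume i: "i < dim_row B" and j: "j < dim_col B"
  have "(A *\<^sub>v unit_vec m j) $ i = (B *\<^sub>v unit_vec m j) $ i" using eq j B by simp
  then show "A $$ (i, j) = B $$ (i, j)" using A B i j by simp
qed (use A B in auto)

lemma eq_mat_on_vecsI:
  fixes A :: "'a::semiring_1 mat"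
  assumes "A \<in> carrier_mat n m" "B \<in> carrier_mat n m"
    and "\<And>v. v \<in> carrier_vec m \<Longrightarrow> A *\<^sub>v v = B *\<^sub>v v"
  shows "A = B"
  using assms by (intro eq_mat_on_unit_vecsI) auto

lemma smult_one_mat_mult_vec:
  fixes x :: "'a::comm_ring_1 vec"
  assumes "x \<in> carrier_vec d"
  shows "(c \<cdot>\<^sub>m 1\<^sub>m d) *\<^sub>v x = c \<cdot>\<^sub>v x"
proof (rule eq_vecI)
  fix i assume "i < dim_vec (c \<cdot>\<^sub>v x)"
  then have i: "i < d" using assms by auto
  have "((c \<cdot>\<^sub>m 1\<^sub>m d) *\<^sub>v x) $ i = (\<Sum>k<d. (c \<cdot>\<^sub>m 1\<^sub>m d) $$ (i, k) * x $ k)"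
    using assms i by (intro index_mult_mat_vec_sum) auto
  also have "\<dots> = (\<Sum>k<d. (if k = i then c * x $ i else 0))"
    using i by (intro sum.cong) auto
  finally show "((c \<cdot>\<^sub>m 1\<^sub>m d) *\<^sub>v x) $ i = (c \<cdot>\<^sub>v x) $ i" using i assms by simp
qed (use assms in auto)

lemma zero_mat_mult_vec[simp]:
  fixes v :: "'a::semiring_0 vec"
  assumes "v \<in> carrier_vec m"
  shows "0\<^sub>m n m *\<^sub>v v = 0\<^sub>v n"
  using assms by (intro eq_vecI) (auto simp: scalar_prod_def)

lemma mult_mat_vec_dim0:
  fixes B :: "'a::semiring_0 mat"
  assumes "B \<in> carrier_mat n 0" "c \<in> carrier_vec 0"
  shows "B *\<^sub>v c = 0\<^sub>v n"
  using assms by (intro eq_vecI) (auto simp: scalar_prod_def)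

lemma mat_trace_mult_comm:
  assumes "A \<in> carrier_mat m k" "B \<in> carrier_mat k m"
  shows "mat_trace m (A * B) = mat_trace k (B * A)"
proof -
  have "mat_trace m (A * B) = (\<Sum>i<m. \<Sum>j<k. A $$ (i, j) * B $$ (j, i))"
    unfolding mat_trace_def using assms by (intro sum.cong refl, subst index_mult_mat_sum) auto
  also have "\<dots> = (\<Sum>j<k. \<Sum>i<m. B $$ (j, i) * A $$ (i, j))"
    by (subst sum.swap) (simp add: mult.commute)
  also have "\<dots> = mat_trace k (B * A)"
    unfolding mat_trace_def using assms by (intro sum.cong refl, subst index_mult_mat_sum) auto
  finally show ?thesis .
qed

lemma mat_trace_smult_one: "mat_trace d (c \<cdot>\<^sub>m 1\<^sub>m d) = c * of_nat d"
  by (simp add: mat_trace_def)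

definition inj_mat :: "nat \<Rightarrow> nat \<Rightarrow> 'a::field mat \<Rightarrow> bool" where
  "inj_mat n k B \<longleftrightarrow> B \<in> carrier_mat n k \<and> (\<forall>c\<in>carrier_vec k. B *\<^sub>v c = 0\<^sub>v n \<longrightarrow> c = 0\<^sub>v k)"

lemma inj_mat_carrier: "inj_mat n k B \<Longrightarrow> B \<in> carrier_mat n k"
  unfolding inj_mat_def by simp

lemma inj_mat_cancel:
  assumes B: "inj_mat n k B" and x: "x \<in> carrier_vec k" and y: "y \<in> carrier_vec k"
    and eq: "B *\<^sub>v x = B *\<^sub>v y"
  shows "x = y"
proof -
  have "B *\<^sub>v (x - y) = 0\<^sub>v n"
    using inj_mat_carrier[OF B] x y eq by (simp add: mult_minus_distrib_mat_vec)
  then have "x - y = 0\<^sub>v k" using B x y unfolding inj_mat_def by auto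
  show "x = y"
  proof (rule eq_vecI)
    fix i assume "i < dim_vec y"
    then have "(x - y) $ i = 0" using \<open>x - y = 0\<^sub>v k\<close> y by simp
    then show "x $ i = y $ i" using x y \<open>i < dim_vec y\<close> by simp
  qed (use x y in simp)
qed

lemma inj_mat_mult:
  assumes B: "inj_mat n k B" and C: "inj_mat k m C"
  shows "inj_mat n m (B * C)"
  unfolding inj_mat_def
proof (intro conjI ballI impI)
  have Bc: "B \<in> carrier_mat n k" and Cc: "C \<in> carrier_mat k m"
    using B C by (auto simp: inj_mat_carrier)
  then show "B * C \<in> carrier_mat n m" by simp
  fix c assume c: "c \<in> carrier_vec m" and "(B * C) *\<^sub>v c = 0\<^sub>v n"
  then have "B *\<^sub>v (C *\<^sub>v c) = 0\<^sub>v n" using Bc Cc by simp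
  then have "C *\<^sub>v c = 0\<^sub>v k" using B Cc c unfolding inj_mat_def by auto
  then show "c = 0\<^sub>v m" using C c unfolding inj_mat_def by auto
qed

lemma inj_mat_dim_le:
  fixes B :: "'a::field mat"
  assumes B: "inj_mat n m B"
  shows "m \<le> n"
proof (rule ccontr)
  assume "\<not> m \<le> n"
  then have mn: "n < m" by simp
  have Bc: "B \<in> carrier_mat n m" using B by (rule inj_mat_carrier)
  \<comment> \<open>pad \<open>B\<close> with zero rows to a singular square matrix\<close>
  define A where "A = mat\<^sub>r m m (\<lambda>i. if i = m - 1 then 0\<^sub>v m else if i < n then row B i else 0\<^sub>v m)"
  have Ac: "A \<in> carrier_mat m m" unfolding A_def by simp
  have "det A = 0" unfolding A_def using mn Bc by (intro det_row_0) auto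
  then obtain c where c: "c \<in> carrier_vec m" "c \<noteq> 0\<^sub>v m" "A *\<^sub>v c = 0\<^sub>v m"
    using det_0_iff_vec_prod_zero_field[OF Ac] by auto
  have "B *\<^sub>v c = 0\<^sub>v n"
  proof (rule eq_vecI)
    fix i assume "i < dim_vec (0\<^sub>v n :: 'a vec)"
    then have i: "i < n" by simp
    have "(A *\<^sub>v c) $ i = 0" using c i mn by simp
    moreover have "i \<noteq> m - 1" using i mn by simp
    ultimately show "(B *\<^sub>v c) $ i = 0\<^sub>v n $ i" using i mn Bc by (simp add: A_def)
  qed (use Bc in simp)
  with B c show False unfolding inj_mat_def by auto
qed

lemma lin_indep_funs_card_le:
  fixes h :: "nat \<Rightarrow> 'x \<Rightarrow> 'k::field"
  assumes fin: "finite X"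
    and indep: "\<And>c. \<forall>u\<in>X. (\<Sum>j<m. c j * h j u) = 0 \<Longrightarrow> \<forall>j<m. c j = 0"
  shows "m \<le> card X"
proof -
  obtain idx where bij: "bij_betw idx {0..<card X} X" using ex_bij_betw_nat_finite[OF fin] by blast
  define A :: "'k mat" where "A = mat (card X) m (\<lambda>(i, j). h j (idx i))"
  have "inj_mat (card X) m A"
    unfolding inj_mat_def
  proof (intro conjI ballI impI)
    show A: "A \<in> carrier_mat (card X) m" unfolding A_def by simp
    fix c :: "'k vec" assume c: "c \<in> carrier_vec m" and Ac: "A *\<^sub>v c = 0\<^sub>v (card X)"
    have "(\<Sum>j<m. c $ j * h j u) = 0" if u: "u \<in> X" for u
    proof -
      have "u \<in> idx ` {0..<card X}" using bij u by (simp add: bij_betw_def)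
      then obtain i where i: "i < card X" "idx i = u" by auto
      have "(\<Sum>j<m. c $ j * h j u) = (A *\<^sub>v c) $ i"
        using i c by (subst index_mult_mat_vec_sum[OF A c]) (auto simp: A_def mult_ac intro!: sum.cong)
      then show ?thesis using Ac i by simp
    qed
    then have "\<forall>j<m. c $ j = 0" using indep[of "\<lambda>j. c $ j"] by blast
    then show "c = 0\<^sub>v m" using c by (intro eq_vecI) auto
  qed
  then show ?thesis by (rule inj_mat_dim_le)
qed

lemma inj_mat_square_surj:
  fixes B :: "'a::field mat"
  assumes B: "inj_mat n n B" and v: "v \<in> carrier_vec n"
  shows "\<exists>c\<in>carrier_vec n. B *\<^sub>v c = v"
proof -
  have Bc: "B \<in> carrier_mat n n" using B by (rule inj_mat_carrier)
  have det: "det B \<noteq> 0" using B det_0_iff_vec_prod_zero_field[OF Bc] unfolding inj_mat_def by auto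
  have adj: "adj_mat B \<in> carrier_mat n n" "B * adj_mat B = det B \<cdot>\<^sub>m 1\<^sub>m n"
    using adj_mat[OF Bc] by auto
  have "B *\<^sub>v (adj_mat B *\<^sub>v v) = det B \<cdot>\<^sub>v v"
    using assoc_mult_mat_vec[OF Bc adj(1) v] adj(2) smult_one_mat_mult_vec[OF v] by simp
  then have "B *\<^sub>v ((1 / det B) \<cdot>\<^sub>v (adj_mat B *\<^sub>v v)) = v"
    using Bc adj v det by (simp add: mult_mat_vec smult_smult_assoc)
  then show ?thesis using adj v by (intro bexI[of _ "(1 / det B) \<cdot>\<^sub>v (adj_mat B *\<^sub>v v)"]) auto
qed

definition lin_subspace :: "nat \<Rightarrow> 'a::field vec set \<Rightarrow> bool" where
  "lin_subspace n U \<longleftrightarrow> U \<subseteq> carrier_vec n \<and> 0\<^sub>v n \<in> U \<and>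
     (\<forall>v\<in>U. \<forall>w\<in>U. v + w \<in> U) \<and> (\<forall>c. \<forall>v\<in>U. c \<cdot>\<^sub>v v \<in> U)"

definition append_col :: "'a mat \<Rightarrow> 'a vec \<Rightarrow> 'a mat" where
  "append_col B u = mat (dim_row B) (Suc (dim_col B))
     (\<lambda>(i, j). if j < dim_col B then B $$ (i, j) else u $ i)"

lemma append_col_carrier: "B \<in> carrier_mat n k \<Longrightarrow> append_col B u \<in> carrier_mat n (Suc k)"
  unfolding append_col_def by simp

lemma append_col_mult_vec:
  fixes B :: "'a::field mat"
  assumes B: "B \<in> carrier_mat n k" and u: "u \<in> carrier_vec n" and c: "c \<in> carrier_vec (Suc k)"
  shows "append_col B u *\<^sub>v c = B *\<^sub>v vec k (\<lambda>j. c $ j) + c $ k \<cdot>\<^sub>v u"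
proof (rule eq_vecI)
  fix i assume "i < dim_vec (B *\<^sub>v vec k (\<lambda>j. c $ j) + c $ k \<cdot>\<^sub>v u)"
  then have i: "i < n" using u by simp
  have "(append_col B u *\<^sub>v c) $ i = (\<Sum>j<Suc k. append_col B u $$ (i, j) * c $ j)"
    using i c append_col_carrier[OF B] by (intro index_mult_mat_vec_sum)
  also have "\<dots> = (\<Sum>j<k. B $$ (i, j) * c $ j) + u $ i * c $ k"
    using i B by (simp add: append_col_def)
  also have "(\<Sum>j<k. B $$ (i, j) * c $ j) = (B *\<^sub>v vec k (\<lambda>j. c $ j)) $ i"
    using i B by (subst index_mult_mat_vec_sum[OF B]) auto
  finally show "(append_col B u *\<^sub>v c) $ i = (B *\<^sub>v vec k (\<lambda>j. c $ j) + c $ k \<cdot>\<^sub>v u) $ i"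
    using i B u by (simp add: mult.commute)
qed (use B u append_col_carrier[OF B] in auto)

lemma inj_mat_append_col:
  fixes B :: "'a::field mat"
  assumes B: "inj_mat n k B" and u: "u \<in> carrier_vec n"
    and u_notin: "\<forall>c\<in>carrier_vec k. B *\<^sub>v c \<noteq> u"
  shows "inj_mat n (Suc k) (append_col B u)"
  unfolding inj_mat_def
proof (intro conjI ballI impI)
  have Bc: "B \<in> carrier_mat n k" using B by (rule inj_mat_carrier)
  then show "append_col B u \<in> carrier_mat n (Suc k)" by (rule append_col_carrier)
  fix c :: "'a vec" assume c: "c \<in> carrier_vec (Suc k)" and z: "append_col B u *\<^sub>v c = 0\<^sub>v n"
  define c' where "c' = vec k (\<lambda>j. c $ j)"
  have c': "c' \<in> carrier_vec k" unfolding c'_def by simp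
  have sum0: "B *\<^sub>v c' + c $ k \<cdot>\<^sub>v u = 0\<^sub>v n"
    using z append_col_mult_vec[OF Bc u c] unfolding c'_def by simp
  have ck: "c $ k = 0"
  proof (rule ccontr)
    assume ck: "c $ k \<noteq> 0"
    have "u = - (1 / c $ k) \<cdot>\<^sub>v (B *\<^sub>v c')"
    proof (rule eq_vecI)
      fix i assume i: "i < dim_vec (- (1 / c $ k) \<cdot>\<^sub>v (B *\<^sub>v c'))"
      then have "(B *\<^sub>v c' + c $ k \<cdot>\<^sub>v u) $ i = 0" using sum0 Bc by simp
      then show "u $ i = (- (1 / c $ k) \<cdot>\<^sub>v (B *\<^sub>v c')) $ i"
        using i ck Bc u by (simp add: field_simps add_eq_0_iff2)
    qed (use Bc u in simp)
    also have "\<dots> = B *\<^sub>v ((- (1 / c $ k)) \<cdot>\<^sub>v c')" using Bc c' by (simp add: mult_mat_vec)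
    finally show False using u_notin c' by auto
  qed
  moreover have "0 \<cdot>\<^sub>v u = 0\<^sub>v n" using u by auto
  ultimately have "B *\<^sub>v c' = 0\<^sub>v n" using sum0 Bc c' by simp
  then have "c' = 0\<^sub>v k" using B c' unfolding inj_mat_def by auto
  show "c = 0\<^sub>v (Suc k)"
  proof (rule eq_vecI)
    fix i assume "i < dim_vec (0\<^sub>v (Suc k) :: 'a vec)"
    then consider "i < k" | "i = k" by fastforce
    then show "c $ i = 0\<^sub>v (Suc k) $ i"
    proof cases
      case 1
      then have "c' $ i = 0" using \<open>c' = 0\<^sub>v k\<close> by simp
      then show ?thesis using 1 by (simp add: c'_def)
    qed (use ck in simp)
  qed (use c in simp)
qed

lemma lin_subspace_col_space:
  fixes U :: "'a::field vec set"
  assumes U: "lin_subspace n U"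
  obtains k B where "inj_mat n k B" "U = {B *\<^sub>v c | c. c \<in> carrier_vec k}"
proof -
  note U_def = U[unfolded lin_subspace_def]
  define spans_into where
    "spans_into k \<longleftrightarrow> (\<exists>B. inj_mat n k B \<and> (\<forall>c\<in>carrier_vec k. B *\<^sub>v c \<in> U))" for k
  have "c = 0\<^sub>v 0" if "c \<in> carrier_vec 0" for c :: "'a vec"
    using that by (intro eq_vecI) auto
  then have "spans_into 0"
    unfolding spans_into_def inj_mat_def using U_def
    by (intro exI[of _ "0\<^sub>m n 0"]) (auto simp: mult_mat_vec_dim0)
  have bound: "k \<le> n" if "spans_into k" for k
    using that inj_mat_dim_le unfolding spans_into_def by blast
  define k where "k = (GREATEST k. spans_into k)"
  have "spans_into k" unfolding k_def using \<open>spans_into 0\<close> bound by (rule GreatestI_nat)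
  then obtain B where B: "inj_mat n k B" and BU: "\<forall>c\<in>carrier_vec k. B *\<^sub>v c \<in> U"
    unfolding spans_into_def by blast
  have Bc: "B \<in> carrier_mat n k" using B by (rule inj_mat_carrier)
  have "U \<subseteq> {B *\<^sub>v c | c. c \<in> carrier_vec k}"
  proof
    fix u assume u: "u \<in> U"
    show "u \<in> {B *\<^sub>v c | c. c \<in> carrier_vec k}"
    proof (rule ccontr)
      assume "u \<notin> {B *\<^sub>v c | c. c \<in> carrier_vec k}"
      then have notin: "\<forall>c\<in>carrier_vec k. B *\<^sub>v c \<noteq> u" by blast
      have uc: "u \<in> carrier_vec n" using u U_def by auto
      have "spans_into (Suc k)"
        unfolding spans_into_def
      proof (intro exI conjI ballI)
        show "inj_mat n (Suc k) (append_col B u)" by (rule inj_mat_append_col[OF B uc notin])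
        fix c :: "'a vec" assume c: "c \<in> carrier_vec (Suc k)"
        have "B *\<^sub>v vec k (\<lambda>j. c $ j) \<in> U" using BU by simp
        then show "append_col B u *\<^sub>v c \<in> U"
          using U_def u by (simp add: append_col_mult_vec[OF Bc uc c])
      qed
      then have "Suc k \<le> k" unfolding k_def using bound by (rule Greatest_le_nat)
      then show False by simp
    qed
  qed
  with BU have "U = {B *\<^sub>v c | c. c \<in> carrier_vec k}" by auto
  with B show thesis by (rule that)
qed

lemma surj_mat_right_inverse:
  fixes T :: "'a::field mat"
  assumes T: "T \<in> carrier_mat n m" and surj: "\<forall>w\<in>carrier_vec n. \<exists>v\<in>carrier_vec m. T *\<^sub>v v = w"
  obtains S where "S \<in> carrier_mat m n" "T * S = 1\<^sub>m n"
proof -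
  have "\<forall>j\<in>{..<n}. \<exists>x. x \<in> carrier_vec m \<and> T *\<^sub>v x = unit_vec n j"
    using surj unit_vec_carrier by blast
  then obtain v where "\<forall>j\<in>{..<n}. v j \<in> carrier_vec m \<and> T *\<^sub>v v j = unit_vec n j"
    by (auto dest!: bchoice)
  then have v: "v j \<in> carrier_vec m \<and> T *\<^sub>v v j = unit_vec n j" if "j < n" for j
    using that by simp
  define S where "S = mat m n (\<lambda>(i, j). v j $ i)"
  have S: "S \<in> carrier_mat m n" unfolding S_def by simp
  have "T * S = 1\<^sub>m n"
  proof (rule eq_mat_on_unit_vecsI)
    fix j assume j: "j < n"
    have "S *\<^sub>v unit_vec n j = v j" using v[OF j] j by (intro eq_vecI) (auto simp: S_def)
    then show "(T * S) *\<^sub>v unit_vec n j = 1\<^sub>m n *\<^sub>v unit_vec n j"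
      using T S v[OF j] by simp
  qed (use T S in auto)
  with S show thesis by (rule that)
qed

lemma inj_mat_right_inverse_left:
  fixes T :: "'a::field mat"
  assumes T: "inj_mat n m T" and S: "S \<in> carrier_mat m n" and TS: "T * S = 1\<^sub>m n"
  shows "S * T = 1\<^sub>m m"
proof (rule eq_mat_on_vecsI)
  have Tc: "T \<in> carrier_mat n m" using T by (rule inj_mat_carrier)
  fix x :: "'a vec" assume x: "x \<in> carrier_vec m"
  have "T *\<^sub>v ((S * T) *\<^sub>v x) = (T * S) *\<^sub>v (T *\<^sub>v x)" using S Tc x by simp
  also have "\<dots> = T *\<^sub>v x" using TS Tc x by simp
  finally show "(S * T) *\<^sub>v x = 1\<^sub>m m *\<^sub>v x"
    using inj_mat_cancel[OF T, of "(S * T) *\<^sub>v x" x] S Tc x by simp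
qed (use S inj_mat_carrier[OF T] in auto)

section \<open>Representations and Schur's lemma\<close>

lemma is_rep_carrier: "is_rep G d \<rho> \<Longrightarrow> s \<in> carrier G \<Longrightarrow> \<rho> s \<in> carrier_mat d d"
  unfolding is_rep_def by auto

lemma is_rep_one: "is_rep G d \<rho> \<Longrightarrow> \<rho> \<one>\<^bsub>G\<^esub> = 1\<^sub>m d"
  unfolding is_rep_def by auto

lemma is_rep_mult:
  "is_rep G d \<rho> \<Longrightarrow> s \<in> carrier G \<Longrightarrow> t \<in> carrier G \<Longrightarrow> \<rho> (s \<otimes>\<^bsub>G\<^esub> t) = \<rho> s * \<rho> t"
  unfolding is_rep_def by auto

lemma irr_rep_is_rep: "irr_rep G d \<rho> \<Longrightarrow> is_rep G d \<rho>"
  unfolding irr_rep_def by auto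

lemma irr_rep_dim_pos: "irr_rep G d \<rho> \<Longrightarrow> 0 < d"
  unfolding irr_rep_def by auto

lemma irr_rep_invariant_trivial:
  "irr_rep G d \<rho> \<Longrightarrow> invariant_subspace G d \<rho> W \<Longrightarrow> W = {0\<^sub>v d} \<or> W = carrier_vec d"
  unfolding irr_rep_def by auto

definition intertwiner :: "('g, 'b) monoid_scheme \<Rightarrow> nat \<Rightarrow> nat \<Rightarrow> ('g \<Rightarrow> 'k::field mat)
    \<Rightarrow> ('g \<Rightarrow> 'k mat) \<Rightarrow> 'k mat \<Rightarrow> bool" where
  "intertwiner G d d' \<rho> \<rho>' T \<longleftrightarrow> T \<in> carrier_mat d' d \<and> (\<forall>s\<in>carrier G. \<rho>' s * T = T * \<rho> s)"

lemma intertwiner_carrier: "intertwiner G d d' \<rho> \<rho>' T \<Longrightarrow> T \<in> carrier_mat d' d"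
  unfolding intertwiner_def by simp

lemma intertwiner_kernel_invariant:
  assumes rep: "is_rep G d \<rho>" and rep': "is_rep G d' \<rho>'" and T: "intertwiner G d d' \<rho> \<rho>' T"
  shows "invariant_subspace G d \<rho> {v \<in> carrier_vec d. T *\<^sub>v v = 0\<^sub>v d'}"
proof -
  have Tc: "T \<in> carrier_mat d' d" using T by (rule intertwiner_carrier)
  show ?thesis
    unfolding invariant_subspace_def
  proof (intro conjI ballI allI)
    fix s x assume s: "s \<in> carrier G" and x: "x \<in> {v \<in> carrier_vec d. T *\<^sub>v v = 0\<^sub>v d'}"
    have Rs: "\<rho> s \<in> carrier_mat d d" "\<rho>' s \<in> carrier_mat d' d'"
      using rep rep' s by (auto simp: is_rep_carrier)
    have "T *\<^sub>v (\<rho> s *\<^sub>v x) = (\<rho>' s * T) *\<^sub>v x" using T s Tc Rs x by (simp add: intertwiner_def)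
    also have "\<dots> = 0\<^sub>v d'" using Tc Rs x by auto
    finally show "\<rho> s *\<^sub>v x \<in> {v \<in> carrier_vec d. T *\<^sub>v v = 0\<^sub>v d'}" using Rs x by auto
  qed (use Tc in \<open>auto simp: mult_add_distrib_mat_vec mult_mat_vec\<close>)
qed

lemma intertwiner_image_invariant:
  assumes rep: "is_rep G d \<rho>" and rep': "is_rep G d' \<rho>'" and T: "intertwiner G d d' \<rho> \<rho>' T"
  shows "invariant_subspace G d' \<rho>' {T *\<^sub>v v | v. v \<in> carrier_vec d}"
proof -
  have Tc: "T \<in> carrier_mat d' d" using T by (rule intertwiner_carrier)
  show ?thesis
    unfolding invariant_subspace_def
  proof (intro conjI ballI allI)
    show "0\<^sub>v d' \<in> {T *\<^sub>v v | v. v \<in> carrier_vec d}" using Tc by (auto intro!: exI[of _ "0\<^sub>v d"])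
    fix x y assume "x \<in> {T *\<^sub>v v | v. v \<in> carrier_vec d}" "y \<in> {T *\<^sub>v v | v. v \<in> carrier_vec d}"
    then obtain u v where "u \<in> carrier_vec d" "v \<in> carrier_vec d" "x = T *\<^sub>v u" "y = T *\<^sub>v v" by auto
    then show "x + y \<in> {T *\<^sub>v v | v. v \<in> carrier_vec d}"
      using Tc by (auto simp: mult_add_distrib_mat_vec intro!: exI[of _ "u + v"])
  next
    fix c x assume "x \<in> {T *\<^sub>v v | v. v \<in> carrier_vec d}"
    then obtain u where "u \<in> carrier_vec d" "x = T *\<^sub>v u" by auto
    then show "c \<cdot>\<^sub>v x \<in> {T *\<^sub>v v | v. v \<in> carrier_vec d}"
      using Tc by (auto simp: mult_mat_vec intro!: exI[of _ "c \<cdot>\<^sub>v u"])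
  next
    fix s x assume s: "s \<in> carrier G" and "x \<in> {T *\<^sub>v v | v. v \<in> carrier_vec d}"
    then obtain u where u: "u \<in> carrier_vec d" "x = T *\<^sub>v u" by auto
    have Rs: "\<rho> s \<in> carrier_mat d d" "\<rho>' s \<in> carrier_mat d' d'"
      using rep rep' s by (auto simp: is_rep_carrier)
    have "\<rho>' s *\<^sub>v x = (\<rho>' s * T) *\<^sub>v u" using Tc Rs u by auto
    also have "\<dots> = T *\<^sub>v (\<rho> s *\<^sub>v u)" using T s Tc Rs u by (simp add: intertwiner_def)
    finally show "\<rho>' s *\<^sub>v x \<in> {T *\<^sub>v v | v. v \<in> carrier_vec d}" using Rs u by auto
  qed (use Tc in auto)
qed

lemma irr_rep_intertwiner_inj:
  assumes irr: "irr_rep G d \<rho>" and rep': "is_rep G d' \<rho>'" and T: "intertwiner G d d' \<rho> \<rho>' T"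
    and T0: "T \<noteq> 0\<^sub>m d' d"
  shows "inj_mat d' d T"
proof -
  have Tc: "T \<in> carrier_mat d' d" using T by (rule intertwiner_carrier)
  let ?K = "{v \<in> carrier_vec d. T *\<^sub>v v = 0\<^sub>v d'}"
  have "?K \<noteq> carrier_vec d"
  proof
    assume "?K = carrier_vec d"
    then have "T = 0\<^sub>m d' d" using Tc by (intro eq_mat_on_vecsI[OF Tc]) auto
    with T0 show False ..
  qed
  then have "?K = {0\<^sub>v d}"
    using irr_rep_invariant_trivial[OF irr intertwiner_kernel_invariant[OF irr_rep_is_rep[OF irr] rep' T]]
    by blast
  then show ?thesis using Tc unfolding inj_mat_def by blast
qed

lemma irr_rep_intertwiner_surj:
  fixes T :: "'k::field mat"
  assumes rep: "is_rep G d \<rho>" and irr': "irr_rep G d' \<rho>'" and T: "intertwiner G d d' \<rho> \<rho>' T"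
    and T0: "T \<noteq> 0\<^sub>m d' d"
  shows "\<forall>w\<in>carrier_vec d'. \<exists>v\<in>carrier_vec d. T *\<^sub>v v = w"
proof -
  have Tc: "T \<in> carrier_mat d' d" using T by (rule intertwiner_carrier)
  let ?I = "{T *\<^sub>v v | v. v \<in> carrier_vec d}"
  have "?I \<noteq> {0\<^sub>v d'}"
  proof
    assume "?I = {0\<^sub>v d'}"
    then have "T = 0\<^sub>m d' d" using Tc by (intro eq_mat_on_vecsI[OF Tc]) auto
    with T0 show False ..
  qed
  then have "?I = carrier_vec d'"
    using irr_rep_invariant_trivial[OF irr' intertwiner_image_invariant[OF rep irr_rep_is_rep[OF irr'] T]]
    by blast
  show ?thesis
  proof
    fix w :: "'k vec" assume "w \<in> carrier_vec d'"
    then have "w \<in> ?I" using \<open>?I = carrier_vec d'\<close> by simp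
    then show "\<exists>v\<in>carrier_vec d. T *\<^sub>v v = w" by blast
  qed
qed

text \<open>Schur's lemma: for an eigenvalue \<open>c\<close> of \<open>A\<close>, \<open>A - c \<cdot> 1\<close> is an intertwiner with a nonzero
  kernel, hence zero.\<close>

lemma irr_rep_commutant_scalar:
  fixes \<rho> :: "'g \<Rightarrow> 'k::field mat"
  assumes ac: "alg_closed_field TYPE('k)" and irr: "irr_rep G d \<rho>" and A: "intertwiner G d d \<rho> \<rho> A"
  obtains c where "A = c \<cdot>\<^sub>m 1\<^sub>m d"
proof -
  have Ac: "A \<in> carrier_mat d d" using A by (rule intertwiner_carrier)
  have rep: "is_rep G d \<rho>" by (rule irr_rep_is_rep[OF irr])
  have "degree (char_poly A) = d" using degree_monic_char_poly[OF Ac] by simp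
  then obtain c where "poly (char_poly A) c = 0"
    using ac irr_rep_dim_pos[OF irr] unfolding alg_closed_field_def by force
  then obtain v where v: "v \<in> carrier_vec d" "v \<noteq> 0\<^sub>v d" "A *\<^sub>v v = c \<cdot>\<^sub>v v"
    using eigenvalue_root_char_poly[OF Ac] Ac unfolding eigenvalue_def eigenvector_def by auto
  let ?B = "A - c \<cdot>\<^sub>m 1\<^sub>m d"
  have "intertwiner G d d \<rho> \<rho> ?B"
    unfolding intertwiner_def
  proof (intro conjI ballI)
    show "?B \<in> carrier_mat d d" by (simp add: minus_carrier_mat)
    fix s assume s: "s \<in> carrier G"
    have Rs: "\<rho> s \<in> carrier_mat d d" using is_rep_carrier[OF rep s] .
    have "\<rho> s * ?B = \<rho> s * A - c \<cdot>\<^sub>m \<rho> s"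
      using Ac Rs by (simp add: mult_minus_distrib_mat mult_smult_distrib[OF Rs one_carrier_mat])
    also have "\<dots> = A * \<rho> s - c \<cdot>\<^sub>m \<rho> s" using A s unfolding intertwiner_def by simp
    also have "\<dots> = ?B * \<rho> s"
      using Ac Rs by (simp add: minus_mult_distrib_mat mult_smult_assoc_mat[OF one_carrier_mat Rs])
    finally show "\<rho> s * ?B = ?B * \<rho> s" .
  qed
  moreover have "?B *\<^sub>v v = 0\<^sub>v d"
    using v Ac by (simp add: minus_mult_distrib_mat_vec smult_one_mat_mult_vec)
  ultimately have "?B = 0\<^sub>m d d"
    using irr_rep_intertwiner_inj[OF irr rep] v unfolding inj_mat_def by blast
  have "A = c \<cdot>\<^sub>m 1\<^sub>m d"
  proof (rule eq_matI)
    fix i j assume ij: "i < dim_row (c \<cdot>\<^sub>m 1\<^sub>m d)" "j < dim_col (c \<cdot>\<^sub>m 1\<^sub>m d)"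
    then have "?B $$ (i, j) = 0" using \<open>?B = 0\<^sub>m d d\<close> by simp
    then show "A $$ (i, j) = (c \<cdot>\<^sub>m 1\<^sub>m d) $$ (i, j)" using ij by simp
  qed (use Ac in auto)
  then show thesis by (rule that)
qed

lemma intertwiner_invertible_char_eq:
  assumes rep: "is_rep G d \<rho>" and rep': "is_rep G d' \<rho>'" and T: "intertwiner G d d' \<rho> \<rho>' T"
    and S: "S \<in> carrier_mat d d'" and TS: "T * S = 1\<^sub>m d'" and ST: "S * T = 1\<^sub>m d"
  shows "char_of G d \<rho> = char_of G d' \<rho>'"
proof
  fix s
  show "char_of G d \<rho> s = char_of G d' \<rho>' s"
  proof (cases "s \<in> carrier G")
    case True
    have Tc: "T \<in> carrier_mat d' d" using T by (rule intertwiner_carrier)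
    have Rs: "\<rho> s \<in> carrier_mat d d" "\<rho>' s \<in> carrier_mat d' d'"
      using rep rep' True by (auto simp: is_rep_carrier)
    have "\<rho>' s = (\<rho>' s * T) * S" using TS Rs Tc S by (simp add: assoc_mult_mat[of _ d' d'])
    also have "\<dots> = T * (\<rho> s * S)" using T True Tc Rs S by (simp add: intertwiner_def assoc_mult_mat)
    finally have "mat_trace d' (\<rho>' s) = mat_trace d ((\<rho> s * S) * T)"
      using Tc Rs S by (simp add: mat_trace_mult_comm[of T d' d])
    also have "(\<rho> s * S) * T = \<rho> s" using ST Rs S Tc by (simp add: assoc_mult_mat[of _ d d])
    finally show ?thesis using True by (simp add: char_of_def)
  qed (simp add: char_of_def)
qed

text \<open>Schur's lemma: a nonzero intertwiner of irreducible representations is invertible.\<close>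

lemma irr_rep_intertwiner_char_eq:
  assumes irr: "irr_rep G d \<rho>" and irr': "irr_rep G d' \<rho>'" and T: "intertwiner G d d' \<rho> \<rho>' T"
    and T0: "T \<noteq> 0\<^sub>m d' d"
  shows "char_of G d \<rho> = char_of G d' \<rho>'"
proof -
  have rep: "is_rep G d \<rho>" and rep': "is_rep G d' \<rho>'" using irr irr' by (auto simp: irr_rep_is_rep)
  have Tc: "T \<in> carrier_mat d' d" using T by (rule intertwiner_carrier)
  obtain S where S: "S \<in> carrier_mat d d'" and TS: "T * S = 1\<^sub>m d'"
    using surj_mat_right_inverse[OF Tc irr_rep_intertwiner_surj[OF rep irr' T T0]] .
  have ST: "S * T = 1\<^sub>m d" by (rule inj_mat_right_inverse_left[OF irr_rep_intertwiner_inj[OF irr rep' T T0] S TS])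
  show ?thesis by (rule intertwiner_invertible_char_eq[OF rep rep' T S TS ST])
qed

section \<open>Orthogonality of matrix coefficients\<close>

definition avg_intertwiner :: "('g, 'b) monoid_scheme \<Rightarrow> nat \<Rightarrow> nat \<Rightarrow> ('g \<Rightarrow> 'k::field mat)
    \<Rightarrow> ('g \<Rightarrow> 'k mat) \<Rightarrow> nat \<Rightarrow> nat \<Rightarrow> 'k mat" where
  "avg_intertwiner G d d' \<rho> \<rho>' a b =
     mat d' d (\<lambda>(i, j). \<Sum>s\<in>carrier G. \<rho>' s $$ (i, a) * \<rho> (inv\<^bsub>G\<^esub> s) $$ (b, j))"

context group
begin

lemma sum_lmult_reindex:
  assumes "t \<in> carrier G"
  shows "(\<Sum>s\<in>carrier G. f (t \<otimes> s)) = (\<Sum>s\<in>carrier G. f s)"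
  by (rule sum.reindex_bij_witness[where i="\<lambda>s. inv t \<otimes> s" and j="\<lambda>s. t \<otimes> s"])
     (use assms in \<open>auto simp: m_assoc[symmetric]\<close>)

lemma sum_rmult_reindex:
  assumes "t \<in> carrier G"
  shows "(\<Sum>s\<in>carrier G. f (s \<otimes> t)) = (\<Sum>s\<in>carrier G. f s)"
  by (rule sum.reindex_bij_witness[where i="\<lambda>s. s \<otimes> inv t" and j="\<lambda>s. s \<otimes> t"])
     (use assms in \<open>auto simp: m_assoc\<close>)

lemma rep_mult_entry:
  assumes "is_rep G d \<rho>" "s \<in> carrier G" "t \<in> carrier G" "i < d" "j < d"
  shows "\<rho> (s \<otimes> t) $$ (i, j) = (\<Sum>k<d. \<rho> s $$ (i, k) * \<rho> t $$ (k, j))"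
  using assms by (simp add: is_rep_mult index_mult_mat_sum[OF is_rep_carrier is_rep_carrier])

lemma rep_inv_mult: "is_rep G d \<rho> \<Longrightarrow> s \<in> carrier G \<Longrightarrow> \<rho> (inv s) * \<rho> s = 1\<^sub>m d"
  by (metis inv_closed l_inv is_rep_mult is_rep_one)

lemma avg_intertwiner_intertwiner:
  fixes \<rho> \<rho>' :: "'a \<Rightarrow> 'k::field mat"
  assumes rep: "is_rep G d \<rho>" and rep': "is_rep G d' \<rho>'" and a: "a < d'" and b: "b < d"
  shows "intertwiner G d d' \<rho> \<rho>' (avg_intertwiner G d d' \<rho> \<rho>' a b)"
  unfolding intertwiner_def
proof (intro conjI ballI)
  define T where "T = avg_intertwiner G d d' \<rho> \<rho>' a b"
  have T: "T \<in> carrier_mat d' d" unfolding T_def avg_intertwiner_def by auto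
  then show "avg_intertwiner G d d' \<rho> \<rho>' a b \<in> carrier_mat d' d" unfolding T_def .
  fix t assume t: "t \<in> carrier G"
  have Rt: "\<rho> t \<in> carrier_mat d d" "\<rho>' t \<in> carrier_mat d' d'"
    using rep rep' t by (auto simp: is_rep_carrier)
  show "\<rho>' t * avg_intertwiner G d d' \<rho> \<rho>' a b = avg_intertwiner G d d' \<rho> \<rho>' a b * \<rho> t"
    unfolding T_def[symmetric]
  proof (rule eq_matI)
    fix i j assume "i < dim_row (T * \<rho> t)" "j < dim_col (T * \<rho> t)"
    then have i: "i < d'" and j: "j < d" using T Rt by auto
    have "(\<rho>' t * T) $$ (i, j) =
        (\<Sum>k<d'. \<Sum>s\<in>carrier G. \<rho>' t $$ (i, k) * (\<rho>' s $$ (k, a) * \<rho> (inv s) $$ (b, j)))"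
      unfolding index_mult_mat_sum[OF Rt(2) T i j] using j
      by (intro sum.cong refl) (auto simp: T_def avg_intertwiner_def sum_distrib_left)
    also have "\<dots> =
        (\<Sum>s\<in>carrier G. (\<Sum>k<d'. \<rho>' t $$ (i, k) * \<rho>' s $$ (k, a)) * \<rho> (inv s) $$ (b, j))"
      by (subst sum.swap) (simp add: sum_distrib_right mult.assoc)
    also have "\<dots> = (\<Sum>s\<in>carrier G. \<rho>' (t \<otimes> s) $$ (i, a) * \<rho> (inv s) $$ (b, j))"
      using rep' t i a by (intro sum.cong refl) (simp add: rep_mult_entry)
    also have "\<dots> = (\<Sum>s\<in>carrier G. \<rho>' s $$ (i, a) * \<rho> (inv s \<otimes> t) $$ (b, j))"
      using sum_lmult_reindex[OF inv_closed[OF t], of "\<lambda>s. \<rho>' (t \<otimes> s) $$ (i, a) * \<rho> (inv s) $$ (b, j)"] t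
      by (simp add: m_assoc[symmetric] inv_mult_group)
    also have "\<dots> = (\<Sum>s\<in>carrier G. \<Sum>k<d. \<rho>' s $$ (i, a) * (\<rho> (inv s) $$ (b, k) * \<rho> t $$ (k, j)))"
      using rep t b j by (intro sum.cong refl) (simp add: rep_mult_entry sum_distrib_left)
    also have "\<dots> = (T * \<rho> t) $$ (i, j)"
      unfolding index_mult_mat_sum[OF T Rt(1) i j] using i
      by (subst sum.swap) (auto simp: T_def avg_intertwiner_def sum_distrib_right mult.assoc intro!: sum.cong)
    finally show "(\<rho>' t * T) $$ (i, j) = (T * \<rho> t) $$ (i, j)" .
  qed (use T Rt in auto)
qed

lemma rep_entries_orth_distinct:
  fixes \<rho> \<rho>' :: "'a \<Rightarrow> 'k::field mat"
  assumes irr: "irr_rep G d \<rho>" and irr': "irr_rep G d' \<rho>'" and ne: "char_of G d \<rho> \<noteq> char_of G d' \<rho>'"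
    and i: "i < d'" and a: "a < d'" and b: "b < d" and j: "j < d"
  shows "(\<Sum>s\<in>carrier G. \<rho>' s $$ (i, a) * \<rho> (inv s) $$ (b, j)) = 0"
proof -
  have "avg_intertwiner G d d' \<rho> \<rho>' a b = 0\<^sub>m d' d"
    using irr_rep_intertwiner_char_eq[OF irr irr' avg_intertwiner_intertwiner] irr irr' a b ne
    by (auto simp: irr_rep_is_rep)
  then have "avg_intertwiner G d d' \<rho> \<rho>' a b $$ (i, j) = 0" using i j by simp
  then show ?thesis using i j by (simp add: avg_intertwiner_def)
qed

lemma rep_entries_orth_same:
  fixes \<rho> :: "'a \<Rightarrow> 'k::field_char_0 mat"
  assumes ac: "alg_closed_field TYPE('k)" and irr: "irr_rep G d \<rho>"
    and i: "i < d" and a: "a < d" and b: "b < d" and j: "j < d"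
  shows "(\<Sum>s\<in>carrier G. \<rho> s $$ (i, a) * \<rho> (inv s) $$ (b, j)) =
    (if i = j \<and> a = b then of_nat (card (carrier G)) / of_nat d else 0)"
proof -
  have rep: "is_rep G d \<rho>" using irr by (rule irr_rep_is_rep)
  define T where "T = avg_intertwiner G d d \<rho> \<rho> a b"
  obtain c where c: "T = c \<cdot>\<^sub>m 1\<^sub>m d"
    using irr_rep_commutant_scalar[OF ac irr avg_intertwiner_intertwiner[OF rep rep a b]]
    unfolding T_def by blast
  \<comment> \<open>the trace of \<open>T\<close> determines \<open>c\<close>\<close>
  have "mat_trace d T = (\<Sum>s\<in>carrier G. \<Sum>k<d. \<rho> (inv s) $$ (b, k) * \<rho> s $$ (k, a))"
    unfolding mat_trace_def T_def avg_intertwiner_def by (simp add: sum.swap[of _ "{..<d}"] mult.commute)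
  also have "\<dots> = (\<Sum>s\<in>carrier G. (\<rho> (inv s) * \<rho> s) $$ (b, a))"
    using a b by (intro sum.cong refl, subst index_mult_mat_sum) (auto intro: is_rep_carrier[OF rep])
  also have "\<dots> = (if a = b then of_nat (card (carrier G)) else 0)"
    using a b by (simp add: rep_inv_mult[OF rep] eq_commute)
  finally have "c * of_nat d = (if a = b then of_nat (card (carrier G)) else 0)"
    unfolding c mat_trace_smult_one .
  then have "c = (if a = b then of_nat (card (carrier G)) / of_nat d else 0)"
    using irr_rep_dim_pos[OF irr] by (auto simp: field_simps split: if_splits)
  moreover have "T $$ (i, j) = (if i = j then c else 0)" using c i j by simp
  ultimately show ?thesis using i j by (auto simp: T_def avg_intertwiner_def)
qed

end

text \<open>A function \<open>a\<close> on \<open>G\<close> stands for the element \<open>\<Sum>s. a s \<cdot> s\<close> of the group algebra: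
  \<open>rep_lin\<close> is its image under a representation and \<open>group_conv\<close> is the product.\<close>

definition rep_lin :: "('g, 'b) monoid_scheme \<Rightarrow> nat \<Rightarrow> ('g \<Rightarrow> 'k::field mat) \<Rightarrow> ('g \<Rightarrow> 'k) \<Rightarrow> 'k mat" where
  "rep_lin G d \<rho> a = mat d d (\<lambda>(i, j). \<Sum>s\<in>carrier G. a s * \<rho> s $$ (i, j))"

definition group_conv :: "('g, 'b) monoid_scheme \<Rightarrow> ('g \<Rightarrow> 'k::field) \<Rightarrow> ('g \<Rightarrow> 'k) \<Rightarrow> 'g \<Rightarrow> 'k" where
  "group_conv G a b = (\<lambda>u. \<Sum>s\<in>carrier G. a s * b (inv\<^bsub>G\<^esub> s \<otimes>\<^bsub>G\<^esub> u))"

definition delta_one :: "('g, 'b) monoid_scheme \<Rightarrow> 'g \<Rightarrow> 'k::field" where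
  "delta_one G = (\<lambda>s. if s = \<one>\<^bsub>G\<^esub> then 1 else 0)"

definition class_fun :: "('g, 'b) monoid_scheme \<Rightarrow> ('g \<Rightarrow> 'k) \<Rightarrow> bool" where
  "class_fun G a \<longleftrightarrow> (\<forall>s\<in>carrier G. \<forall>t\<in>carrier G. a (t \<otimes>\<^bsub>G\<^esub> s \<otimes>\<^bsub>G\<^esub> inv\<^bsub>G\<^esub> t) = a s)"

text \<open>The central idempotent \<open>e\<^sub>\<psi>\<close> as a function on \<open>G\<close>; \<^const>\<open>e_idem\<close> is its image in \<open>H\<close>.\<close>

definition char_idem :: "('g, 'b) monoid_scheme \<Rightarrow> ('g \<Rightarrow> 'k::field) \<Rightarrow> 'g \<Rightarrow> 'k" where
  "char_idem G \<psi> = (\<lambda>s. \<psi> \<one>\<^bsub>G\<^esub> / of_nat (card (carrier G)) * \<psi> (inv\<^bsub>G\<^esub> s))"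

lemma rep_lin_carrier[simp]: "rep_lin G d \<rho> a \<in> carrier_mat d d"
  unfolding rep_lin_def by simp

lemma rep_lin_dim[simp]: "dim_row (rep_lin G d \<rho> a) = d" "dim_col (rep_lin G d \<rho> a) = d"
  unfolding rep_lin_def by simp_all

lemma rep_lin_cong: "(\<And>s. s \<in> carrier G \<Longrightarrow> a s = b s) \<Longrightarrow> rep_lin G d \<rho> a = rep_lin G d \<rho> b"
  unfolding rep_lin_def by (intro eq_matI) auto

lemma index_rep_lin_sum:
  assumes "i < d" "j < d"
  shows "rep_lin G d \<rho> (\<lambda>u. \<Sum>p\<in>P. c p * f p u) $$ (i, j) = (\<Sum>p\<in>P. c p * rep_lin G d \<rho> (f p) $$ (i, j))"
  using assms unfolding rep_lin_def
  by (simp add: sum_distrib_right sum_distrib_left mult_ac) (rule sum.swap)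

lemma rep_lin_diff: "rep_lin G d \<rho> (\<lambda>u. a u - b u) = rep_lin G d \<rho> a - rep_lin G d \<rho> b"
  unfolding rep_lin_def by (intro eq_matI) (auto simp: left_diff_distrib sum_subtractf)

lemma index_rep_lin_mult_vec:
  assumes R: "\<And>s. s \<in> carrier G \<Longrightarrow> \<rho> s \<in> carrier_mat d d" and v: "v \<in> carrier_vec d" and i: "i < d"
  shows "(rep_lin G d \<rho> a *\<^sub>v v) $ i = (\<Sum>s\<in>carrier G. a s * (\<rho> s *\<^sub>v v) $ i)"
proof -
  have "(rep_lin G d \<rho> a *\<^sub>v v) $ i = (\<Sum>k<d. (\<Sum>s\<in>carrier G. a s * \<rho> s $$ (i, k)) * v $ k)"
    using v i by (subst index_mult_mat_vec_sum[OF rep_lin_carrier v i]) (simp add: rep_lin_def)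
  also have "\<dots> = (\<Sum>s\<in>carrier G. a s * (\<Sum>k<d. \<rho> s $$ (i, k) * v $ k))"
    unfolding sum_distrib_left sum_distrib_right by (subst sum.swap) (simp add: mult.assoc)
  also have "\<dots> = (\<Sum>s\<in>carrier G. a s * (\<rho> s *\<^sub>v v) $ i)"
    using R v i by (intro sum.cong refl) (simp add: index_mult_mat_vec_sum[OF R])
  finally show ?thesis .
qed

lemma index_rep_lin_mult:
  assumes R: "\<And>s. s \<in> carrier G \<Longrightarrow> \<rho> s \<in> carrier_mat d d" and X: "X \<in> carrier_mat d k"
    and i: "i < d" and j: "j < k"
  shows "(rep_lin G d \<rho> a * X) $$ (i, j) = (\<Sum>s\<in>carrier G. a s * (\<rho> s * X) $$ (i, j))"
proof -
  have "(rep_lin G d \<rho> a * X) $$ (i, j) = (\<Sum>l<d. (\<Sum>s\<in>carrier G. a s * \<rho> s $$ (i, l)) * X $$ (l, j))"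
    using i j by (subst index_mult_mat_sum[OF rep_lin_carrier X]) (auto simp: rep_lin_def)
  also have "\<dots> = (\<Sum>s\<in>carrier G. a s * (\<Sum>l<d. \<rho> s $$ (i, l) * X $$ (l, j)))"
    by (simp add: sum_distrib_left sum_distrib_right mult.assoc) (rule sum.swap)
  also have "\<dots> = (\<Sum>s\<in>carrier G. a s * (\<rho> s * X) $$ (i, j))"
    by (intro sum.cong refl) (simp add: index_mult_mat_sum[OF R X i j])
  finally show ?thesis .
qed

lemma index_mult_rep_lin:
  assumes R: "\<And>s. s \<in> carrier G \<Longrightarrow> \<rho> s \<in> carrier_mat d d" and X: "X \<in> carrier_mat k d"
    and i: "i < k" and j: "j < d"
  shows "(X * rep_lin G d \<rho> a) $$ (i, j) = (\<Sum>s\<in>carrier G. a s * (X * \<rho> s) $$ (i, j))"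
proof -
  have "(X * rep_lin G d \<rho> a) $$ (i, j) = (\<Sum>l<d. X $$ (i, l) * (\<Sum>s\<in>carrier G. a s * \<rho> s $$ (l, j)))"
    using i j by (subst index_mult_mat_sum[OF X rep_lin_carrier]) (auto simp: rep_lin_def)
  also have "\<dots> = (\<Sum>s\<in>carrier G. a s * (\<Sum>l<d. X $$ (i, l) * \<rho> s $$ (l, j)))"
    by (simp add: sum_distrib_left mult_ac) (rule sum.swap)
  also have "\<dots> = (\<Sum>s\<in>carrier G. a s * (X * \<rho> s) $$ (i, j))"
    by (intro sum.cong refl) (simp add: index_mult_mat_sum[OF X R i j])
  finally show ?thesis .
qed

lemma rep_lin_restrict:
  assumes rep: "is_rep G N \<sigma>" and repM: "is_rep G k M" and B: "B \<in> carrier_mat N k"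
    and BM: "\<forall>s\<in>carrier G. \<sigma> s * B = B * M s"
  shows "rep_lin G N \<sigma> a * B = B * rep_lin G k M a"
proof (rule eq_matI)
  fix i j assume "i < dim_row (B * rep_lin G k M a)" "j < dim_col (B * rep_lin G k M a)"
  then have i: "i < N" and j: "j < k" using B by auto
  have "(rep_lin G N \<sigma> a * B) $$ (i, j) = (\<Sum>s\<in>carrier G. a s * (\<sigma> s * B) $$ (i, j))"
    by (rule index_rep_lin_mult[OF is_rep_carrier[OF rep] B i j])
  also have "\<dots> = (\<Sum>s\<in>carrier G. a s * (B * M s) $$ (i, j))" using BM by simp
  also have "\<dots> = (B * rep_lin G k M a) $$ (i, j)"
    by (rule index_mult_rep_lin[OF is_rep_carrier[OF repM] B i j, symmetric])
  finally show "(rep_lin G N \<sigma> a * B) $$ (i, j) = (B * rep_lin G k M a) $$ (i, j)" .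
qed (use B in auto)

lemma mat_trace_rep_lin_mult:
  assumes rep: "is_rep G d \<rho>" and R: "R \<in> carrier_mat d d"
  shows "(\<Sum>t\<in>carrier G. a t * mat_trace d (\<rho> t * R)) = mat_trace d (rep_lin G d \<rho> a * R)"
proof -
  have "mat_trace d (rep_lin G d \<rho> a * R) = (\<Sum>i<d. \<Sum>t\<in>carrier G. a t * (\<rho> t * R) $$ (i, i))"
    unfolding mat_trace_def by (intro sum.cong refl index_rep_lin_mult[OF is_rep_carrier[OF rep] R]) auto
  also have "\<dots> = (\<Sum>t\<in>carrier G. a t * mat_trace d (\<rho> t * R))"
    by (simp add: mat_trace_def sum_distrib_left) (rule sum.swap)
  finally show ?thesis ..
qed

lemma group_conv_diff_left: "group_conv G (\<lambda>x. a x - b x) c u = group_conv G a c u - group_conv G b c u"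
  unfolding group_conv_def by (simp add: left_diff_distrib sum_subtractf)

lemma group_conv_diff_right: "group_conv G a (\<lambda>x. b x - c x) u = group_conv G a b u - group_conv G a c u"
  unfolding group_conv_def by (simp add: right_diff_distrib sum_subtractf)

lemma group_conv_sum_left: "group_conv G (\<lambda>x. \<Sum>p\<in>P. f p x) c u = (\<Sum>p\<in>P. group_conv G (f p) c u)"
  unfolding group_conv_def by (simp add: sum_distrib_right) (rule sum.swap)

lemma group_conv_sum_right: "group_conv G a (\<lambda>x. \<Sum>p\<in>P. f p x) u = (\<Sum>p\<in>P. group_conv G a (f p) u)"
  unfolding group_conv_def by (simp add: sum_distrib_left) (rule sum.swap)

lemma group_conv_cong_left:
  "(\<And>s. s \<in> carrier G \<Longrightarrow> a s = b s) \<Longrightarrow> group_conv G a c u = group_conv G b c u"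
  unfolding group_conv_def by simp

context group
begin

lemma group_conv_delta_one_left:
  assumes "finite (carrier G)" "u \<in> carrier G"
  shows "group_conv G (delta_one G) b u = b u"
  using assms by (simp add: group_conv_def delta_one_def if_distrib[of "\<lambda>x. x * _"] cong: if_cong)

lemma group_conv_delta_one_right:
  assumes "finite (carrier G)" and u: "u \<in> carrier G"
  shows "group_conv G a (delta_one G) u = a u"
proof -
  have "inv s \<otimes> u = \<one> \<longleftrightarrow> s = u" if s: "s \<in> carrier G" for s
  proof
    assume "inv s \<otimes> u = \<one>"
    then have "s \<otimes> (inv s \<otimes> u) = s \<otimes> \<one>" by simp
    then show "s = u" using s u by (simp add: m_assoc[symmetric])
  qed (use u in simp)
  then have "group_conv G a (delta_one G) u = (\<Sum>s\<in>carrier G. if s = u then a s else 0)"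
    unfolding group_conv_def delta_one_def by (intro sum.cong) auto
  then show ?thesis using assms by simp
qed

lemma rep_lin_delta_one:
  assumes "finite (carrier G)" "is_rep G d \<rho>"
  shows "rep_lin G d \<rho> (delta_one G) = 1\<^sub>m d"
  unfolding rep_lin_def delta_one_def using assms is_rep_one[OF assms(2)]
  by (intro eq_matI) (auto simp: if_distrib[of "\<lambda>x. x * _"] cong: if_cong)

lemma delta_one_class_fun: "class_fun G (delta_one G)"
  unfolding class_fun_def delta_one_def
proof (intro ballI)
  fix s t assume s: "s \<in> carrier G" and t: "t \<in> carrier G"
  have "t \<otimes> s \<otimes> inv t = \<one> \<longleftrightarrow> s = \<one>"
  proof
    assume "t \<otimes> s \<otimes> inv t = \<one>"
    then have "inv t \<otimes> (t \<otimes> s \<otimes> inv t) \<otimes> t = inv t \<otimes> \<one> \<otimes> t" by simp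
    then show "s = \<one>" using s t by (simp add: m_assoc[symmetric]) (simp add: m_assoc)
  qed (use t in simp)
  then show "(if t \<otimes> s \<otimes> inv t = \<one> then 1 else 0) = (if s = \<one> then 1 else 0)" by simp
qed

lemma rep_mult_rep_lin:
  assumes rep: "is_rep G d \<rho>" and t: "t \<in> carrier G"
  shows "\<rho> t * rep_lin G d \<rho> a = rep_lin G d \<rho> (\<lambda>u. a (inv t \<otimes> u))"
proof (rule eq_matI)
  fix i j assume "i < dim_row (rep_lin G d \<rho> (\<lambda>u. a (inv t \<otimes> u)))"
    "j < dim_col (rep_lin G d \<rho> (\<lambda>u. a (inv t \<otimes> u)))"
  then have i: "i < d" and j: "j < d" by auto
  have "(\<rho> t * rep_lin G d \<rho> a) $$ (i, j) = (\<Sum>s\<in>carrier G. a (inv t \<otimes> (t \<otimes> s)) * \<rho> (t \<otimes> s) $$ (i, j))"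
    using index_mult_rep_lin[OF is_rep_carrier[OF rep] is_rep_carrier[OF rep t] i j] t
    by (simp add: is_rep_mult[OF rep] m_assoc[symmetric])
  also have "\<dots> = rep_lin G d \<rho> (\<lambda>u. a (inv t \<otimes> u)) $$ (i, j)"
    using i j by (simp add: rep_lin_def sum_lmult_reindex[OF t, of "\<lambda>u. a (inv t \<otimes> u) * \<rho> u $$ (i, j)"])
  finally show "(\<rho> t * rep_lin G d \<rho> a) $$ (i, j) = rep_lin G d \<rho> (\<lambda>u. a (inv t \<otimes> u)) $$ (i, j)" .
qed (use is_rep_carrier[OF rep t] in auto)

lemma rep_lin_mult_rep:
  assumes rep: "is_rep G d \<rho>" and t: "t \<in> carrier G"
  shows "rep_lin G d \<rho> a * \<rho> t = rep_lin G d \<rho> (\<lambda>u. a (u \<otimes> inv t))"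
proof (rule eq_matI)
  fix i j assume "i < dim_row (rep_lin G d \<rho> (\<lambda>u. a (u \<otimes> inv t)))"
    "j < dim_col (rep_lin G d \<rho> (\<lambda>u. a (u \<otimes> inv t)))"
  then have i: "i < d" and j: "j < d" by auto
  have "(rep_lin G d \<rho> a * \<rho> t) $$ (i, j) = (\<Sum>s\<in>carrier G. a (s \<otimes> t \<otimes> inv t) * \<rho> (s \<otimes> t) $$ (i, j))"
    using index_rep_lin_mult[OF is_rep_carrier[OF rep] is_rep_carrier[OF rep t] i j] t
    by (simp add: is_rep_mult[OF rep] m_assoc)
  also have "\<dots> = rep_lin G d \<rho> (\<lambda>u. a (u \<otimes> inv t)) $$ (i, j)"
    using i j by (simp add: rep_lin_def sum_rmult_reindex[OF t, of "\<lambda>u. a (u \<otimes> inv t) * \<rho> u $$ (i, j)"])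
  finally show "(rep_lin G d \<rho> a * \<rho> t) $$ (i, j) = rep_lin G d \<rho> (\<lambda>u. a (u \<otimes> inv t)) $$ (i, j)" .
qed (use is_rep_carrier[OF rep t] in auto)

lemma rep_lin_group_conv:
  assumes rep: "is_rep G d \<rho>"
  shows "rep_lin G d \<rho> (group_conv G a b) = rep_lin G d \<rho> a * rep_lin G d \<rho> b"
proof (rule eq_matI)
  fix i j assume "i < dim_row (rep_lin G d \<rho> a * rep_lin G d \<rho> b)"
    "j < dim_col (rep_lin G d \<rho> a * rep_lin G d \<rho> b)"
  then have i: "i < d" and j: "j < d" by auto
  have "(rep_lin G d \<rho> a * rep_lin G d \<rho> b) $$ (i, j) =
      (\<Sum>s\<in>carrier G. a s * (\<rho> s * rep_lin G d \<rho> b) $$ (i, j))"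
    by (rule index_rep_lin_mult[OF is_rep_carrier[OF rep] rep_lin_carrier i j])
  also have "\<dots> = (\<Sum>s\<in>carrier G. a s * rep_lin G d \<rho> (\<lambda>u. b (inv s \<otimes> u)) $$ (i, j))"
    using rep by (simp add: rep_mult_rep_lin)
  also have "\<dots> = rep_lin G d \<rho> (group_conv G a b) $$ (i, j)"
    using i j by (simp add: rep_lin_def group_conv_def sum_distrib_left sum_distrib_right mult_ac)
      (rule sum.swap)
  finally show "rep_lin G d \<rho> (group_conv G a b) $$ (i, j) = (rep_lin G d \<rho> a * rep_lin G d \<rho> b) $$ (i, j)" ..
qed auto

lemma rep_lin_class_fun_intertwiner:
  assumes rep: "is_rep G d \<rho>" and cl: "class_fun G a"
  shows "intertwiner G d d \<rho> \<rho> (rep_lin G d \<rho> a)"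
  unfolding intertwiner_def
proof (intro conjI ballI)
  fix t assume t: "t \<in> carrier G"
  have "a (u \<otimes> inv t) = a (inv t \<otimes> u)" if u: "u \<in> carrier G" for u
  proof -
    have "t \<otimes> (inv t \<otimes> u) \<otimes> inv t = u \<otimes> inv t" using t u by (simp add: m_assoc[symmetric])
    then show ?thesis using cl t u unfolding class_fun_def by (metis inv_closed m_closed)
  qed
  then have "rep_lin G d \<rho> (\<lambda>u. a (u \<otimes> inv t)) = rep_lin G d \<rho> (\<lambda>u. a (inv t \<otimes> u))"
    by (rule rep_lin_cong)
  then show "\<rho> t * rep_lin G d \<rho> a = rep_lin G d \<rho> a * \<rho> t"
    using rep t by (simp add: rep_mult_rep_lin rep_lin_mult_rep)
qed simp

end

lemma IrrE:
  assumes "\<psi> \<in> Irr G"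
  obtains d \<rho> where "irr_rep G d \<rho>" "\<psi> = char_of G d \<rho>"
  using assms unfolding Irr_def by auto

lemma IrrI: "irr_rep G d \<rho> \<Longrightarrow> char_of G d \<rho> \<in> Irr G"
  unfolding Irr_def by auto

lemma char_of_in_carrier: "s \<in> carrier G \<Longrightarrow> char_of G d \<rho> s = (\<Sum>b<d. \<rho> s $$ (b, b))"
  unfolding char_of_def mat_trace_def by simp

context group
begin

lemma char_of_one: "is_rep G d \<rho> \<Longrightarrow> char_of G d \<rho> \<one> = of_nat d"
  by (simp add: char_of_in_carrier is_rep_one)

lemma char_of_mult_comm:
  assumes rep: "is_rep G d \<rho>" and s: "s \<in> carrier G" and t: "t \<in> carrier G"
  shows "char_of G d \<rho> (s \<otimes> t) = char_of G d \<rho> (t \<otimes> s)"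
  using s t mat_trace_mult_comm[OF is_rep_carrier[OF rep s] is_rep_carrier[OF rep t]]
  by (simp add: char_of_def is_rep_mult[OF rep])

lemma char_idem_class_fun:
  assumes rep: "is_rep G d \<rho>"
  shows "class_fun G (char_idem G (char_of G d \<rho>))"
  unfolding class_fun_def
proof (intro ballI)
  fix s t assume s: "s \<in> carrier G" and t: "t \<in> carrier G"
  have "char_of G d \<rho> (inv (t \<otimes> s \<otimes> inv t)) = char_of G d \<rho> ((t \<otimes> inv s) \<otimes> inv t)"
    using s t by (simp add: inv_mult_group m_assoc)
  also have "\<dots> = char_of G d \<rho> (inv s)"
    using s t char_of_mult_comm[OF rep, of "t \<otimes> inv s" "inv t"] by (simp add: m_assoc[symmetric])
  finally show "char_idem G (char_of G d \<rho>) (t \<otimes> s \<otimes> inv t) = char_idem G (char_of G d \<rho>) s"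
    by (simp add: char_idem_def)
qed

lemma rep_lin_char_idem:
  fixes \<rho> \<rho>' :: "'a \<Rightarrow> 'k::field_char_0 mat"
  assumes fin: "finite (carrier G)" and ac: "alg_closed_field TYPE('k)"
    and irr: "irr_rep G d \<rho>" and irr': "irr_rep G d' \<rho>'"
  shows "rep_lin G d' \<rho>' (char_idem G (char_of G d \<rho>)) =
    (if char_of G d \<rho> = char_of G d' \<rho>' then 1\<^sub>m d' else 0\<^sub>m d' d')"
proof (rule eq_matI)
  let ?N = "of_nat (card (carrier G)) :: 'k"
  have N0: "?N \<noteq> 0" using fin card_gt_0_iff by force
  fix i j assume "i < dim_row (if char_of G d \<rho> = char_of G d' \<rho>' then 1\<^sub>m d' else 0\<^sub>m d' d')"
    "j < dim_col (if char_of G d \<rho> = char_of G d' \<rho>' then 1\<^sub>m d' else 0\<^sub>m d' d')"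
  then have i: "i < d'" and j: "j < d'" by (auto split: if_splits)
  have expand: "(\<Sum>s\<in>carrier G. \<rho>' s $$ (i, j) * char_of G e \<tau> (inv s)) =
      (\<Sum>b<e. \<Sum>s\<in>carrier G. \<rho>' s $$ (i, j) * \<tau> (inv s) $$ (b, b))" for e \<tau>
    by (simp add: char_of_in_carrier sum_distrib_left) (rule sum.swap)
  have "rep_lin G d' \<rho>' (char_idem G (char_of G d \<rho>)) $$ (i, j) =
      char_of G d \<rho> \<one> / ?N * (\<Sum>s\<in>carrier G. \<rho>' s $$ (i, j) * char_of G d \<rho> (inv s))"
    using i j by (simp add: rep_lin_def char_idem_def sum_distrib_left mult_ac)
  also have "\<dots> = (if char_of G d \<rho> = char_of G d' \<rho>' then 1\<^sub>m d' else 0\<^sub>m d' d') $$ (i, j)"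
  proof (cases "char_of G d \<rho> = char_of G d' \<rho>'")
    case True
    have "(\<Sum>s\<in>carrier G. \<rho>' s $$ (i, j) * char_of G d' \<rho>' (inv s)) =
        (if i = j then ?N / of_nat d' else 0)"
      unfolding expand using i j
      by (cases "i = j") (auto simp: rep_entries_orth_same[OF ac irr'] intro!: sum.neutral)
    then show ?thesis
      using True i j N0 irr_rep_dim_pos[OF irr'] char_of_one[OF irr_rep_is_rep[OF irr']] by auto
  next
    case False
    then show ?thesis unfolding expand using i j by (simp add: rep_entries_orth_distinct[OF irr irr'])
  qed
  finally show "rep_lin G d' \<rho>' (char_idem G (char_of G d \<rho>)) $$ (i, j) =
      (if char_of G d \<rho> = char_of G d' \<rho>' then 1\<^sub>m d' else 0\<^sub>m d' d') $$ (i, j)" .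
qed auto

lemma group_conv_char_idem_left:
  assumes rep: "is_rep G d \<rho>" and u: "u \<in> carrier G"
  shows "group_conv G (char_idem G (char_of G d \<rho>)) a u =
    of_nat d / of_nat (card (carrier G)) * mat_trace d (rep_lin G d \<rho> a * \<rho> (inv u))"
proof -
  let ?\<psi> = "char_of G d \<rho>"
  let ?c = "of_nat d / of_nat (card (carrier G))"
  have "group_conv G (char_idem G ?\<psi>) a u = (\<Sum>s\<in>carrier G. ?c * ?\<psi> (inv s) * a (inv s \<otimes> u))"
    by (simp add: group_conv_def char_idem_def char_of_one[OF rep])
  also have "\<dots> = (\<Sum>t\<in>carrier G. ?c * ?\<psi> (t \<otimes> inv u) * a t)"
  proof (rule sum.reindex_bij_witness[where i="\<lambda>t. u \<otimes> inv t" and j="\<lambda>s. inv s \<otimes> u"])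
    fix s assume s: "s \<in> carrier G"
    show "u \<otimes> inv (inv s \<otimes> u) = s" using s u by (simp add: inv_mult_group m_assoc[symmetric])
    show "?c * ?\<psi> (inv s \<otimes> u \<otimes> inv u) * a (inv s \<otimes> u) = ?c * ?\<psi> (inv s) * a (inv s \<otimes> u)"
      using s u by (simp add: m_assoc)
  next
    fix t assume t: "t \<in> carrier G"
    show "inv (u \<otimes> inv t) \<otimes> u = t" using t u by (simp add: inv_mult_group m_assoc)
  qed (use u in auto)
  also have "\<dots> = ?c * (\<Sum>t\<in>carrier G. a t * mat_trace d (\<rho> t * \<rho> (inv u)))"
    using u by (simp add: sum_distrib_left char_of_def is_rep_mult[OF rep] mult_ac)
  also have "\<dots> = ?c * mat_trace d (rep_lin G d \<rho> a * \<rho> (inv u))"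
    using mat_trace_rep_lin_mult[OF rep is_rep_carrier[OF rep inv_closed[OF u]]] by simp
  finally show ?thesis .
qed

lemma group_conv_char_idem:
  fixes \<rho> \<rho>' :: "'a \<Rightarrow> 'k::field_char_0 mat"
  assumes fin: "finite (carrier G)" and ac: "alg_closed_field TYPE('k)"
    and irr: "irr_rep G d \<rho>" and irr': "irr_rep G d' \<rho>'" and u: "u \<in> carrier G"
  shows "group_conv G (char_idem G (char_of G d \<rho>)) (char_idem G (char_of G d' \<rho>')) u =
    (if char_of G d' \<rho>' = char_of G d \<rho> then char_idem G (char_of G d \<rho>) u else 0)"
proof -
  have rep: "is_rep G d \<rho>" using irr by (rule irr_rep_is_rep)
  have R: "\<rho> (inv u) \<in> carrier_mat d d" using is_rep_carrier[OF rep inv_closed[OF u]] .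
  show ?thesis
  proof (cases "char_of G d' \<rho>' = char_of G d \<rho>")
    case True
    then show ?thesis
      unfolding group_conv_char_idem_left[OF rep u] rep_lin_char_idem[OF fin ac irr' irr]
      using R u char_of_one[OF rep] by (simp add: char_idem_def char_of_in_carrier mat_trace_def)
  next
    case False
    then show ?thesis
      unfolding group_conv_char_idem_left[OF rep u] rep_lin_char_idem[OF fin ac irr' irr]
      using R by (simp add: mat_trace_def)
  qed
qed

end

section \<open>Completeness of the central idempotents\<close>

definition regular_rep :: "('g, 'b) monoid_scheme \<Rightarrow> (nat \<Rightarrow> 'g) \<Rightarrow> nat \<Rightarrow> 'g \<Rightarrow> 'k::field mat" where
  "regular_rep G idx N s = mat N N (\<lambda>(i, j). if idx i = s \<otimes>\<^bsub>G\<^esub> idx j then 1 else 0)"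

definition col_space_invariant :: "('g, 'b) monoid_scheme \<Rightarrow> ('g \<Rightarrow> 'k::field mat) \<Rightarrow> nat \<Rightarrow> 'k mat \<Rightarrow> bool" where
  "col_space_invariant G \<sigma> k B \<longleftrightarrow>
     (\<forall>s\<in>carrier G. \<forall>c\<in>carrier_vec k. \<exists>c'\<in>carrier_vec k. \<sigma> s *\<^sub>v (B *\<^sub>v c) = B *\<^sub>v c')"

definition fixed_subrep :: "('g, 'b) monoid_scheme \<Rightarrow> nat \<Rightarrow> ('g \<Rightarrow> 'k::field mat) \<Rightarrow> 'k mat
    \<Rightarrow> nat \<Rightarrow> 'k mat \<Rightarrow> bool" where
  "fixed_subrep G N \<sigma> F k B \<longleftrightarrow> 0 < k \<and> inj_mat N k B \<and> col_space_invariant G \<sigma> k B \<and> F * B = B"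

lemma col_space_invariant_restrict:
  fixes B :: "'k::field mat"
  assumes rep: "is_rep G N \<sigma>" and B: "B \<in> carrier_mat N k"
    and inv: "col_space_invariant G \<sigma> k B"
  obtains M where "\<And>s. M s \<in> carrier_mat k k" "\<forall>s\<in>carrier G. \<sigma> s * B = B * M s"
proof -
  have \<sigma>: "\<sigma> s \<in> carrier_mat N N" if "s \<in> carrier G" for s using rep that by (rule is_rep_carrier)
  define col where "col s j = (SOME c. c \<in> carrier_vec k \<and> \<sigma> s *\<^sub>v (B *\<^sub>v unit_vec k j) = B *\<^sub>v c)"
    for s j
  have col: "col s j \<in> carrier_vec k \<and> \<sigma> s *\<^sub>v (B *\<^sub>v unit_vec k j) = B *\<^sub>v col s j"
    if "s \<in> carrier G" "j < k" for s j
    unfolding col_def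
    by (rule someI_ex) (use inv that unit_vec_carrier in \<open>unfold col_space_invariant_def, blast\<close>)
  define M where "M s = mat k k (\<lambda>(i, j). col s j $ i)" for s
  have M: "M s \<in> carrier_mat k k" for s unfolding M_def by simp
  have "\<forall>s\<in>carrier G. \<sigma> s * B = B * M s"
  proof
    fix s assume s: "s \<in> carrier G"
    show "\<sigma> s * B = B * M s"
    proof (rule eq_mat_on_unit_vecsI)
      fix j assume j: "j < k"
      have "M s *\<^sub>v unit_vec k j = col s j" using col[OF s j] j by (intro eq_vecI) (auto simp: M_def)
      then show "(\<sigma> s * B) *\<^sub>v unit_vec k j = (B * M s) *\<^sub>v unit_vec k j"
        using col[OF s j] \<sigma>[OF s] B M[of s] by (simp add: assoc_mult_mat_vec)
    qed (use \<sigma>[OF s] B M[of s] in auto)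
  qed
  with M show thesis by (rule that)
qed

context group
begin

lemma restriction_is_rep:
  fixes B :: "'k::field mat"
  assumes rep: "is_rep G N \<sigma>" and B: "inj_mat N k B" and M: "\<And>s. M s \<in> carrier_mat k k"
    and BM: "\<forall>s\<in>carrier G. \<sigma> s * B = B * M s"
  shows "is_rep G k M"
  unfolding is_rep_def
proof (intro conjI ballI)
  have Bc: "B \<in> carrier_mat N k" using B by (rule inj_mat_carrier)
  have cancel: "X = Y" if "X \<in> carrier_mat k k" "Y \<in> carrier_mat k k" "B * X = B * Y" for X Y
  proof (rule eq_mat_on_vecsI[OF that(1,2)])
    fix c :: "'k vec" assume c: "c \<in> carrier_vec k"
    have "B *\<^sub>v (X *\<^sub>v c) = B *\<^sub>v (Y *\<^sub>v c)"
      using that c assoc_mult_mat_vec[OF Bc that(1) c] assoc_mult_mat_vec[OF Bc that(2) c] by simp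
    then show "X *\<^sub>v c = Y *\<^sub>v c" using inj_mat_cancel[OF B] that c by simp
  qed
  show "M s \<in> carrier_mat k k" for s by (rule M)
  have "B * M \<one> = \<sigma> \<one> * B" by (rule BM[rule_format, OF one_closed, symmetric])
  also have "\<dots> = B * 1\<^sub>m k" using Bc is_rep_one[OF rep] by simp
  finally show "M \<one> = 1\<^sub>m k" by (rule cancel[OF M one_carrier_mat])
  fix s t assume s: "s \<in> carrier G" and t: "t \<in> carrier G"
  have Rs: "\<sigma> s \<in> carrier_mat N N" and Rt: "\<sigma> t \<in> carrier_mat N N"
    using rep s t by (auto simp: is_rep_carrier)
  have "B * M (s \<otimes> t) = (\<sigma> s * \<sigma> t) * B"
    using BM[rule_format, OF m_closed[OF s t]] is_rep_mult[OF rep s t] by simp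
  also have "\<dots> = \<sigma> s * (B * M t)" using assoc_mult_mat[OF Rs Rt Bc] BM t by simp
  also have "\<dots> = (B * M s) * M t" using assoc_mult_mat[OF Rs Bc M, symmetric] BM s by simp
  also have "\<dots> = B * (M s * M t)" by (rule assoc_mult_mat[OF Bc M M])
  finally show "M (s \<otimes> t) = M s * M t" by (rule cancel[OF M mult_carrier_mat[OF M M]])
qed

lemma regular_rep_is_rep:
  assumes bij: "bij_betw idx {0..<N} (carrier G)"
  shows "is_rep G N (regular_rep G idx N :: 'a \<Rightarrow> 'k::field mat)"
  unfolding is_rep_def
proof (intro conjI ballI)
  have idx: "\<And>i. i < N \<Longrightarrow> idx i \<in> carrier G" using bij by (auto simp: bij_betw_def)
  have idx_inj: "\<And>i j. i < N \<Longrightarrow> j < N \<Longrightarrow> idx i = idx j \<Longrightarrow> i = j"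
    using bij by (auto simp: bij_betw_def inj_on_def)
  show "regular_rep G idx N s \<in> carrier_mat N N" for s unfolding regular_rep_def by simp
  show "regular_rep G idx N \<one> = (1\<^sub>m N :: 'k mat)"
    unfolding regular_rep_def using idx idx_inj by (intro eq_matI) auto
  fix s t assume s: "s \<in> carrier G" and t: "t \<in> carrier G"
  show "regular_rep G idx N (s \<otimes> t) = (regular_rep G idx N s * regular_rep G idx N t :: 'k mat)"
  proof (rule eq_matI)
    fix i j assume "i < dim_row (regular_rep G idx N s * regular_rep G idx N t :: 'k mat)"
      "j < dim_col (regular_rep G idx N s * regular_rep G idx N t :: 'k mat)"
    then have i: "i < N" and j: "j < N" unfolding regular_rep_def by auto
    have "t \<otimes> idx j \<in> idx ` {0..<N}" using bij t idx[OF j] by (simp add: bij_betw_def)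
    then obtain k0 where k0: "k0 < N" "idx k0 = t \<otimes> idx j" by auto
    have "(regular_rep G idx N s * regular_rep G idx N t :: 'k mat) $$ (i, j) =
        (\<Sum>k<N. regular_rep G idx N s $$ (i, k) * (regular_rep G idx N t :: 'k mat) $$ (k, j))"
      using i j by (intro index_mult_mat_sum) (auto simp: regular_rep_def)
    also have "\<dots> = (\<Sum>k<N. if k = k0 then (if idx i = s \<otimes> idx k0 then 1 else 0) else 0)"
      using i j k0 idx_inj by (intro sum.cong refl) (auto simp: regular_rep_def)
    also have "\<dots> = (if idx i = s \<otimes> t \<otimes> idx j then 1 else 0)"
      using k0 s t idx[OF j] by (simp add: m_assoc)
    finally show "regular_rep G idx N (s \<otimes> t) $$ (i, j) =
        (regular_rep G idx N s * regular_rep G idx N t :: 'k mat) $$ (i, j)"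
      using i j by (simp add: regular_rep_def)
  qed (auto simp: regular_rep_def)
qed

lemma regular_rep_faithful:
  fixes a :: "'a \<Rightarrow> 'k::field"
  assumes fin: "finite (carrier G)" and bij: "bij_betw idx {0..<N} (carrier G)"
    and a: "rep_lin G N (regular_rep G idx N) a = 0\<^sub>m N N" and u: "u \<in> carrier G"
  shows "a u = 0"
proof -
  have "u \<in> idx ` {0..<N}" "\<one> \<in> idx ` {0..<N}" using bij u by (auto simp: bij_betw_def)
  then obtain i j1 where i: "i < N" "idx i = u" and j1: "j1 < N" "idx j1 = \<one>" by auto
  have idx: "\<And>i. i < N \<Longrightarrow> idx i \<in> carrier G" using bij by (auto simp: bij_betw_def)
  have "0 = rep_lin G N (regular_rep G idx N) a $$ (i, j1)" using a i j1 by simp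
  also have "\<dots> = (\<Sum>s\<in>carrier G. if s = u then a s else 0)"
    using i j1 idx u by (auto simp: rep_lin_def regular_rep_def intro!: sum.cong)
  also have "\<dots> = a u" using fin u by simp
  finally show ?thesis ..
qed

lemma image_fixed_subrep:
  fixes F :: "'k::field mat"
  assumes rep: "is_rep G N \<sigma>" and F: "intertwiner G N N \<sigma> \<sigma> F" and FF: "F * F = F"
    and F0: "F \<noteq> 0\<^sub>m N N"
  obtains k B where "fixed_subrep G N \<sigma> F k B"
proof -
  have Fc: "F \<in> carrier_mat N N" using F by (rule intertwiner_carrier)
  let ?R = "{F *\<^sub>v v | v. v \<in> carrier_vec N}"
  have inv: "invariant_subspace G N \<sigma> ?R" by (rule intertwiner_image_invariant[OF rep rep F])
  then have "lin_subspace N ?R" unfolding invariant_subspace_def lin_subspace_def by blast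
  then obtain k B where B: "inj_mat N k B" and R: "?R = {B *\<^sub>v c | c. c \<in> carrier_vec k}"
    by (rule lin_subspace_col_space)
  have Bc: "B \<in> carrier_mat N k" using B by (rule inj_mat_carrier)
  have BR: "\<exists>v\<in>carrier_vec N. B *\<^sub>v c = F *\<^sub>v v" if "c \<in> carrier_vec k" for c :: "'k vec"
    using that R by blast
  have "0 < k"
  proof (rule ccontr)
    assume "\<not> 0 < k"
    have "F *\<^sub>v v = 0\<^sub>v N" if v: "v \<in> carrier_vec N" for v
    proof -
      obtain c :: "'k vec" where "c \<in> carrier_vec k" "F *\<^sub>v v = B *\<^sub>v c" using R v by blast
      then show ?thesis using Bc \<open>\<not> 0 < k\<close> by (simp add: mult_mat_vec_dim0)
    qed
    then have "F = 0\<^sub>m N N" using Fc by (intro eq_mat_on_vecsI) auto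
    with F0 show False ..
  qed
  moreover have "col_space_invariant G \<sigma> k B"
    unfolding col_space_invariant_def
  proof (intro ballI)
    fix s and c :: "'k vec" assume s: "s \<in> carrier G" and c: "c \<in> carrier_vec k"
    have "B *\<^sub>v c \<in> ?R" using R c by blast
    then have "\<sigma> s *\<^sub>v (B *\<^sub>v c) \<in> ?R" using inv s unfolding invariant_subspace_def by blast
    then show "\<exists>c'\<in>carrier_vec k. \<sigma> s *\<^sub>v (B *\<^sub>v c) = B *\<^sub>v c'" using R by auto
  qed
  moreover have "F * B = B"
  proof (rule eq_mat_on_vecsI)
    fix c :: "'k vec" assume c: "c \<in> carrier_vec k"
    obtain v where v: "v \<in> carrier_vec N" "B *\<^sub>v c = F *\<^sub>v v" using BR[OF c] by blast
    have "F *\<^sub>v (F *\<^sub>v v) = (F * F) *\<^sub>v v" using Fc v by simp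
    then show "(F * B) *\<^sub>v c = B *\<^sub>v c" using v c Fc Bc FF by simp
  qed (use Fc Bc in auto)
  ultimately show thesis using B by (intro that) (auto simp: fixed_subrep_def)
qed

lemma fixed_subrep_compose:
  fixes B :: "'k::field mat"
  assumes rep: "is_rep G N \<sigma>" and Fc: "F \<in> carrier_mat N N" and B: "fixed_subrep G N \<sigma> F k B"
    and repM: "is_rep G k M" and BM: "\<forall>s\<in>carrier G. \<sigma> s * B = B * M s"
    and k': "0 < k'" and B': "inj_mat k k' B'" and inv: "col_space_invariant G M k' B'"
  shows "fixed_subrep G N \<sigma> F k' (B * B')"
  unfolding fixed_subrep_def col_space_invariant_def
proof (intro conjI ballI k')
  have inj: "inj_mat N k B" and FB: "F * B = B" using B unfolding fixed_subrep_def by auto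
  have Bc: "B \<in> carrier_mat N k" and B'c: "B' \<in> carrier_mat k k'"
    using inj B' by (auto simp: inj_mat_carrier)
  show "inj_mat N k' (B * B')" by (rule inj_mat_mult[OF inj B'])
  show "F * (B * B') = B * B'" using assoc_mult_mat[OF Fc Bc B'c] FB by simp
  fix s and c :: "'k vec" assume s: "s \<in> carrier G" and c: "c \<in> carrier_vec k'"
  obtain c' where c': "c' \<in> carrier_vec k'" "M s *\<^sub>v (B' *\<^sub>v c) = B' *\<^sub>v c'"
    using inv s c unfolding col_space_invariant_def by blast
  have "\<sigma> s *\<^sub>v ((B * B') *\<^sub>v c) = (\<sigma> s * B) *\<^sub>v (B' *\<^sub>v c)"
    using Bc B'c c is_rep_carrier[OF rep s] by simp
  also have "\<dots> = (B * B') *\<^sub>v c'" using BM s c' Bc B'c is_rep_carrier[OF repM s] c by simp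
  finally show "\<exists>c'\<in>carrier_vec k'. \<sigma> s *\<^sub>v ((B * B') *\<^sub>v c) = (B * B') *\<^sub>v c'" using c' by blast
qed

text \<open>A proper invariant subspace would be a fixed subrepresentation of smaller dimension.\<close>

lemma minimal_fixed_subrep_irr:
  fixes B :: "'k::field mat"
  assumes rep: "is_rep G N \<sigma>" and Fc: "F \<in> carrier_mat N N" and B: "fixed_subrep G N \<sigma> F k B"
    and min: "\<And>k' B'. fixed_subrep G N \<sigma> F k' B' \<Longrightarrow> k \<le> k'"
    and repM: "is_rep G k M" and BM: "\<forall>s\<in>carrier G. \<sigma> s * B = B * M s"
  shows "irr_rep G k M"
  unfolding irr_rep_def
proof (intro conjI allI impI repM)
  show "0 < k" using B unfolding fixed_subrep_def by simp
  fix W assume W: "invariant_subspace G k M W"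
  show "W = {0\<^sub>v k} \<or> W = carrier_vec k"
  proof (cases "W = {0\<^sub>v k}")
    case False
    then obtain w where w: "w \<in> W" "w \<noteq> 0\<^sub>v k" using W unfolding invariant_subspace_def by blast
    have "lin_subspace k W" using W unfolding invariant_subspace_def lin_subspace_def by blast
    then obtain k' B' where B': "inj_mat k k' B'" and WB: "W = {B' *\<^sub>v c | c. c \<in> carrier_vec k'}"
      by (rule lin_subspace_col_space)
    have "0 < k'"
    proof (rule ccontr)
      assume "\<not> 0 < k'"
      obtain c where "c \<in> carrier_vec k'" "w = B' *\<^sub>v c" using w WB by blast
      then show False using w inj_mat_carrier[OF B'] \<open>\<not> 0 < k'\<close> by (simp add: mult_mat_vec_dim0)
    qed
    moreover have "col_space_invariant G M k' B'"
      using W unfolding col_space_invariant_def invariant_subspace_def WB by blast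
    ultimately have "fixed_subrep G N \<sigma> F k' (B * B')"
      by (intro fixed_subrep_compose[OF rep Fc B repM BM _ B'])
    then have "k' = k" using min inj_mat_dim_le[OF B'] by (simp add: le_antisym)
    then have "W = carrier_vec k"
      using WB inj_mat_square_surj[of k B'] B' W unfolding invariant_subspace_def by auto
    then show ?thesis ..
  qed simp
qed

lemma minimal_fixed_subrep:
  fixes F :: "'k::field mat"
  assumes rep: "is_rep G N \<sigma>" and F: "intertwiner G N N \<sigma> \<sigma> F" and FF: "F * F = F"
    and F0: "F \<noteq> 0\<^sub>m N N"
  obtains k B M where "fixed_subrep G N \<sigma> F k B" "irr_rep G k M" "\<forall>s\<in>carrier G. \<sigma> s * B = B * M s"
proof -
  have Fc: "F \<in> carrier_mat N N" using F by (rule intertwiner_carrier)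
  obtain k0 B0 where "fixed_subrep G N \<sigma> F k0 B0" by (rule image_fixed_subrep[OF rep F FF F0])
  define k where "k = (LEAST k. \<exists>B. fixed_subrep G N \<sigma> F k B)"
  have "\<exists>B. fixed_subrep G N \<sigma> F k B"
    unfolding k_def by (rule LeastI_ex) (use \<open>fixed_subrep G N \<sigma> F k0 B0\<close> in blast)
  then obtain B where B: "fixed_subrep G N \<sigma> F k B" ..
  have min: "k \<le> k'" if "fixed_subrep G N \<sigma> F k' B'" for k' B'
    unfolding k_def by (rule Least_le) (use that in blast)
  have inj: "inj_mat N k B" and "col_space_invariant G \<sigma> k B"
    using B unfolding fixed_subrep_def by auto
  then obtain M where M: "\<And>s. M s \<in> carrier_mat k k" and BM: "\<forall>s\<in>carrier G. \<sigma> s * B = B * M s"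
    using col_space_invariant_restrict[OF rep inj_mat_carrier[OF inj]] by blast
  have repM: "is_rep G k M" by (rule restriction_is_rep[OF rep inj M BM])
  have "irr_rep G k M" by (rule minimal_fixed_subrep_irr[OF rep Fc B]) (use min repM BM in auto)
  with B BM show thesis by (intro that)
qed

text \<open>If \<open>a \<noteq> 0\<close>, then \<open>\<sigma>(a)\<close> is a nonzero idempotent commuting with the regular
  representation \<open>\<sigma>\<close>; it acts as the identity on an irreducible subrepresentation of \<open>\<sigma>\<close>,
  where \<open>a\<close> would have to act as zero.\<close>

lemma class_idem_vanishes:
  fixes a :: "'a \<Rightarrow> 'k::field"
  assumes fin: "finite (carrier G)" and cl: "class_fun G a"
    and idem: "\<forall>u\<in>carrier G. group_conv G a a u = a u"
    and kill: "\<And>d (\<rho> :: 'a \<Rightarrow> 'k mat). irr_rep G d \<rho> \<Longrightarrow> rep_lin G d \<rho> a = 0\<^sub>m d d"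
    and u: "u \<in> carrier G"
  shows "a u = 0"
proof (rule ccontr)
  assume au: "a u \<noteq> 0"
  define N where "N = card (carrier G)"
  obtain idx where bij: "bij_betw idx {0..<N} (carrier G)"
    using ex_bij_betw_nat_finite[OF fin] unfolding N_def by blast
  define \<sigma> :: "'a \<Rightarrow> 'k mat" where "\<sigma> = regular_rep G idx N"
  define F where "F = rep_lin G N \<sigma> a"
  have rep: "is_rep G N \<sigma>" unfolding \<sigma>_def using bij by (rule regular_rep_is_rep)
  have F: "intertwiner G N N \<sigma> \<sigma> F" unfolding F_def using rep cl by (rule rep_lin_class_fun_intertwiner)
  have "F * F = rep_lin G N \<sigma> (group_conv G a a)" unfolding F_def by (rule rep_lin_group_conv[OF rep, symmetric])
  also have "\<dots> = F" unfolding F_def using idem by (intro rep_lin_cong) auto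
  finally have FF: "F * F = F" .
  have F0: "F \<noteq> 0\<^sub>m N N"
  proof
    assume "F = 0\<^sub>m N N"
    then have "rep_lin G N (regular_rep G idx N) a = 0\<^sub>m N N" by (simp add: F_def \<sigma>_def)
    with au show False using regular_rep_faithful[OF fin bij _ u] by blast
  qed
  obtain k B M where B: "fixed_subrep G N \<sigma> F k B" and irr: "irr_rep G k M"
    and BM: "\<forall>s\<in>carrier G. \<sigma> s * B = B * M s"
    by (rule minimal_fixed_subrep[OF rep F FF F0])
  have inj: "inj_mat N k B" and FB: "F * B = B" and k0: "0 < k"
    using B unfolding fixed_subrep_def by auto
  have Bc: "B \<in> carrier_mat N k" using inj by (rule inj_mat_carrier)
  have "B = F * B" using FB by simp
  also have "\<dots> = B * rep_lin G k M a"
    unfolding F_def by (rule rep_lin_restrict[OF rep irr_rep_is_rep[OF irr] Bc BM])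
  also have "\<dots> = 0\<^sub>m N k" using kill[OF irr] Bc by simp
  finally have "B *\<^sub>v unit_vec k 0 = 0\<^sub>v N" by simp
  then have "unit_vec k 0 = (0\<^sub>v k :: 'k vec)" using inj unfolding inj_mat_def by simp
  then have "unit_vec k 0 $ 0 = (0\<^sub>v k :: 'k vec) $ 0" by simp
  then show False using k0 by simp
qed

lemma char_idem_lin_indep:
  fixes h :: "nat \<Rightarrow> 'a \<Rightarrow> 'k::field_char_0"
  assumes fin: "finite (carrier G)" and ac: "alg_closed_field TYPE('k)"
    and h: "inj_on h {..<m}" "h ` {..<m} \<subseteq> Irr G"
    and z: "\<forall>u\<in>carrier G. (\<Sum>j<m. c j * char_idem G (h j) u) = 0"
  shows "\<forall>j<m. c j = 0"
proof (intro allI impI)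
  fix j0 assume j0: "j0 < m"
  have "h j0 \<in> Irr G" using h(2) j0 by auto
  then obtain d and \<rho> :: "'a \<Rightarrow> 'k mat" where irr: "irr_rep G d \<rho>" and e: "h j0 = char_of G d \<rho>"
    by (rule IrrE)
  have d: "0 < d" using irr by (rule irr_rep_dim_pos)
  have "0 = rep_lin G d \<rho> (\<lambda>u. \<Sum>j<m. c j * char_idem G (h j) u) $$ (0, 0)"
    using z d by (simp add: rep_lin_def)
  also have "\<dots> = (\<Sum>j<m. c j * rep_lin G d \<rho> (char_idem G (h j)) $$ (0, 0))"
    by (rule index_rep_lin_sum[OF d d])
  also have "\<dots> = (\<Sum>j<m. if j = j0 then c j else 0)"
  proof (intro sum.cong refl)
    fix j assume j: "j \<in> {..<m}"
    have "h j \<in> Irr G" using h(2) j by auto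
    then obtain d' and \<rho>' :: "'a \<Rightarrow> 'k mat" where irr': "irr_rep G d' \<rho>'" and e': "h j = char_of G d' \<rho>'"
      by (rule IrrE)
    have "rep_lin G d \<rho> (char_idem G (h j)) $$ (0, 0) = (if h j = h j0 then 1 else 0)"
      using d by (simp add: e e' rep_lin_char_idem[OF fin ac irr' irr])
    moreover have "h j = h j0 \<longleftrightarrow> j = j0" using h(1) j j0 by (auto simp: inj_on_def)
    ultimately show "c j * rep_lin G d \<rho> (char_idem G (h j)) $$ (0, 0) = (if j = j0 then c j else 0)"
      by simp
  qed
  also have "\<dots> = c j0" using j0 by simp
  finally show "c j0 = 0" ..
qed

lemma finite_Irr:
  assumes fin: "finite (carrier G)" and ac: "alg_closed_field TYPE('k::field_char_0)"
  shows "finite (Irr G :: ('a \<Rightarrow> 'k) set)"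
proof (rule ccontr)
  assume "infinite (Irr G :: ('a \<Rightarrow> 'k) set)"
  then obtain S :: "('a \<Rightarrow> 'k) set" where S: "finite S" "card S = Suc (card (carrier G))" "S \<subseteq> Irr G"
    using infinite_arbitrarily_large by blast
  obtain h where h: "bij_betw h {..<card S} S"
    using ex_bij_betw_nat_finite[OF S(1)] by (auto simp: atLeast0LessThan)
  have "card S \<le> card (carrier G)"
  proof (rule lin_indep_funs_card_le[OF fin, where m = "card S" and h = "\<lambda>j. char_idem G (h j)"])
    fix c assume "\<forall>u\<in>carrier G. (\<Sum>j<card S. c j * char_idem G (h j) u) = 0"
    then show "\<forall>j<card S. c j = 0"
      using h S(3) by (intro char_idem_lin_indep[OF fin ac]) (auto simp: bij_betw_def)
  qed
  with S(2) show False by simp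
qed

lemma rep_lin_sum_char_idem:
  fixes \<rho> :: "'a \<Rightarrow> 'k::field_char_0 mat"
  assumes fin: "finite (carrier G)" and ac: "alg_closed_field TYPE('k)" and irr: "irr_rep G d \<rho>"
  shows "rep_lin G d \<rho> (\<lambda>u. \<Sum>\<psi>\<in>Irr G. char_idem G \<psi> u) = 1\<^sub>m d"
proof (rule eq_matI)
  fix i j assume "i < dim_row (1\<^sub>m d :: 'k mat)" "j < dim_col (1\<^sub>m d :: 'k mat)"
  then have i: "i < d" and j: "j < d" by auto
  have "rep_lin G d \<rho> (\<lambda>u. \<Sum>\<psi>\<in>Irr G. char_idem G \<psi> u) $$ (i, j) =
      (\<Sum>\<psi>\<in>Irr G. rep_lin G d \<rho> (char_idem G \<psi>) $$ (i, j))"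
    using index_rep_lin_sum[OF i j, where \<rho> = \<rho> and c = "\<lambda>_. 1" and f = "char_idem G" and P = "Irr G"]
    by simp
  also have "\<dots> = (\<Sum>\<psi>\<in>Irr G. if \<psi> = char_of G d \<rho> then 1\<^sub>m d $$ (i, j) else 0)"
  proof (intro sum.cong refl)
    fix \<psi> :: "'a \<Rightarrow> 'k" assume "\<psi> \<in> Irr G"
    then obtain d' and \<rho>' :: "'a \<Rightarrow> 'k mat" where irr': "irr_rep G d' \<rho>'" and e: "\<psi> = char_of G d' \<rho>'"
      by (rule IrrE)
    show "rep_lin G d \<rho> (char_idem G \<psi>) $$ (i, j) = (if \<psi> = char_of G d \<rho> then 1\<^sub>m d $$ (i, j) else 0)"
      using i j unfolding e by (simp add: rep_lin_char_idem[OF fin ac irr' irr])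
  qed
  also have "\<dots> = 1\<^sub>m d $$ (i, j)" using finite_Irr[OF fin ac] IrrI[OF irr] by simp
  finally show "rep_lin G d \<rho> (\<lambda>u. \<Sum>\<psi>\<in>Irr G. char_idem G \<psi> u) $$ (i, j) = 1\<^sub>m d $$ (i, j)" .
qed auto

lemma group_conv_sum_char_idem:
  assumes fin: "finite (carrier G)" and ac: "alg_closed_field TYPE('k::field_char_0)"
    and u: "u \<in> carrier G"
  defines "E \<equiv> \<lambda>u. \<Sum>\<psi>\<in>(Irr G :: ('a \<Rightarrow> 'k) set). char_idem G \<psi> u"
  shows "group_conv G E E u = E u"
proof -
  have "group_conv G E E u = (\<Sum>\<psi>\<in>Irr G. \<Sum>\<psi>'\<in>Irr G. group_conv G (char_idem G \<psi>) (char_idem G \<psi>') u)"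
    unfolding E_def group_conv_sum_left group_conv_sum_right ..
  also have "\<dots> = (\<Sum>\<psi>\<in>Irr G. \<Sum>\<psi>'\<in>Irr G. if \<psi>' = \<psi> then char_idem G \<psi> u else 0)"
  proof (intro sum.cong refl)
    fix \<psi> \<psi>' :: "'a \<Rightarrow> 'k" assume "\<psi> \<in> Irr G" "\<psi>' \<in> Irr G"
    then obtain d d' and \<rho> \<rho>' :: "'a \<Rightarrow> 'k mat" where irr: "irr_rep G d \<rho>" "\<psi> = char_of G d \<rho>"
      and irr': "irr_rep G d' \<rho>'" "\<psi>' = char_of G d' \<rho>'"
      by (metis IrrE)
    show "group_conv G (char_idem G \<psi>) (char_idem G \<psi>') u = (if \<psi>' = \<psi> then char_idem G \<psi> u else 0)"
      unfolding irr(2) irr'(2) by (rule group_conv_char_idem[OF fin ac irr(1) irr'(1) u])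
  qed
  also have "\<dots> = E u" using finite_Irr[OF fin ac] by (simp add: E_def)
  finally show ?thesis .
qed

text \<open>\<open>\<delta>\<^sub>1 - \<Sum>\<^sub>\<psi> e\<^sub>\<psi>\<close> is a central idempotent that every simple module kills.\<close>

theorem sum_char_idem_Irr:
  assumes fin: "finite (carrier G)" and ac: "alg_closed_field TYPE('k::field_char_0)"
    and u: "u \<in> carrier G"
  shows "(\<Sum>\<psi>\<in>(Irr G :: ('a \<Rightarrow> 'k) set). char_idem G \<psi> u) = delta_one G u"
proof -
  define E where "E u = (\<Sum>\<psi>\<in>(Irr G :: ('a \<Rightarrow> 'k) set). char_idem G \<psi> u)" for u
  define f where "f u = delta_one G u - E u" for u
  have "class_fun G E"
    unfolding class_fun_def E_def
    using char_idem_class_fun[OF irr_rep_is_rep] by (auto elim!: IrrE simp: class_fun_def intro!: sum.cong)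
  then have "class_fun G f" using delta_one_class_fun by (simp add: class_fun_def f_def)
  moreover have "\<forall>v\<in>carrier G. group_conv G f f v = f v"
  proof
    fix v assume v: "v \<in> carrier G"
    have "group_conv G f f v = f v - (group_conv G E (delta_one G) v - group_conv G E E v)"
      unfolding f_def[abs_def] group_conv_diff_left group_conv_diff_right group_conv_delta_one_left[OF fin v] ..
    also have "\<dots> = f v"
      using group_conv_sum_char_idem[OF fin ac v] group_conv_delta_one_right[OF fin v, of E]
      by (simp add: E_def[abs_def])
    finally show "group_conv G f f v = f v" .
  qed
  moreover have "rep_lin G d \<rho> f = 0\<^sub>m d d" if "irr_rep G d \<rho>" for d and \<rho> :: "'a \<Rightarrow> 'k mat"
    using rep_lin_delta_one[OF fin irr_rep_is_rep[OF that]] rep_lin_sum_char_idem[OF fin ac that]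
    unfolding f_def[abs_def] rep_lin_diff E_def by simp
  ultimately have "f u = 0" by (rule class_idem_vanishes[OF fin _ _ _ u])
  then show ?thesis by (simp add: f_def E_def)
qed

end

section \<open>Twisting a representation by a linear character\<close>

definition scale_rep :: "('g \<Rightarrow> 'k::field) \<Rightarrow> ('g \<Rightarrow> 'k mat) \<Rightarrow> 'g \<Rightarrow> 'k mat" where
  "scale_rep \<phi> \<rho> = (\<lambda>s. \<phi> s \<cdot>\<^sub>m \<rho> s)"

context group
begin

lemma scale_rep_is_rep:
  assumes rep: "is_rep G d \<rho>" and \<phi>1: "\<phi> \<one> = 1"
    and \<phi>_mult: "\<forall>s\<in>carrier G. \<forall>t\<in>carrier G. \<phi> (s \<otimes> t) = \<phi> s * \<phi> t"
  shows "is_rep G d (scale_rep \<phi> \<rho>)"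
  unfolding is_rep_def scale_rep_def
proof (intro conjI ballI)
  show "\<phi> s \<cdot>\<^sub>m \<rho> s \<in> carrier_mat d d" if "s \<in> carrier G" for s
    using is_rep_carrier[OF rep that] by simp
  show "\<phi> \<one> \<cdot>\<^sub>m \<rho> \<one> = 1\<^sub>m d" using \<phi>1 is_rep_one[OF rep] by (auto intro!: eq_matI)
  fix s t assume s: "s \<in> carrier G" and t: "t \<in> carrier G"
  have Rs: "\<rho> s \<in> carrier_mat d d" "\<rho> t \<in> carrier_mat d d" using rep s t by (auto simp: is_rep_carrier)
  show "\<phi> (s \<otimes> t) \<cdot>\<^sub>m \<rho> (s \<otimes> t) = \<phi> s \<cdot>\<^sub>m \<rho> s * (\<phi> t \<cdot>\<^sub>m \<rho> t)"
    using Rs s t \<phi>_mult is_rep_mult[OF rep s t]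
    by (simp add: mult_smult_assoc_mat[OF Rs(1)] mult_smult_distrib[OF Rs(1)])
      (auto simp: mult.commute intro!: eq_matI)
qed

lemma scale_rep_irr:
  assumes irr: "irr_rep G d \<rho>" and \<phi>1: "\<phi> \<one> = 1"
    and \<phi>_mult: "\<forall>s\<in>carrier G. \<forall>t\<in>carrier G. \<phi> (s \<otimes> t) = \<phi> s * \<phi> t"
    and \<phi>0: "\<forall>s\<in>carrier G. \<phi> s \<noteq> 0"
  shows "irr_rep G d (scale_rep \<phi> \<rho>)"
  unfolding irr_rep_def
proof (intro conjI allI impI)
  have rep: "is_rep G d \<rho>" using irr by (rule irr_rep_is_rep)
  show "is_rep G d (scale_rep \<phi> \<rho>)" by (rule scale_rep_is_rep[OF rep \<phi>1 \<phi>_mult])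
  show "0 < d" using irr by (rule irr_rep_dim_pos)
  fix W assume W: "invariant_subspace G d (scale_rep \<phi> \<rho>) W"
  \<comment> \<open>the invariant subspaces of \<open>\<rho>\<close> and of its rescaling coincide\<close>
  have "invariant_subspace G d \<rho> W"
    unfolding invariant_subspace_def
  proof (intro conjI ballI allI)
    show "W \<subseteq> carrier_vec d" "0\<^sub>v d \<in> W" "\<And>v w. v \<in> W \<Longrightarrow> w \<in> W \<Longrightarrow> v + w \<in> W"
      "\<And>c v. v \<in> W \<Longrightarrow> c \<cdot>\<^sub>v v \<in> W"
      using W unfolding invariant_subspace_def by auto
    fix s v assume s: "s \<in> carrier G" and v: "v \<in> W"
    have "v \<in> carrier_vec d" using W v unfolding invariant_subspace_def by auto
    then have "scale_rep \<phi> \<rho> s *\<^sub>v v = \<phi> s \<cdot>\<^sub>v (\<rho> s *\<^sub>v v)"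
      using is_rep_carrier[OF rep s]
      by (intro eq_vecI) (auto simp: scale_rep_def scalar_prod_def sum_distrib_left mult.assoc)
    then have "\<rho> s *\<^sub>v v = inverse (\<phi> s) \<cdot>\<^sub>v (scale_rep \<phi> \<rho> s *\<^sub>v v)"
      using \<phi>0 s by (simp add: smult_smult_assoc)
    moreover have "scale_rep \<phi> \<rho> s *\<^sub>v v \<in> W" using W s v unfolding invariant_subspace_def by auto
    ultimately show "\<rho> s *\<^sub>v v \<in> W" using W unfolding invariant_subspace_def by auto
  qed
  then show "W = {0\<^sub>v d} \<or> W = carrier_vec d" by (rule irr_rep_invariant_trivial[OF irr])
qed

lemma char_of_scale_rep:
  assumes "is_rep G d \<rho>"
  shows "char_of G d (scale_rep \<phi> \<rho>) = (\<lambda>s. \<phi> s * char_of G d \<rho> s)"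
proof -
  have "mat_trace d (\<phi> s \<cdot>\<^sub>m \<rho> s) = \<phi> s * mat_trace d (\<rho> s)" if "s \<in> carrier G" for s
    using is_rep_carrier[OF assms that] by (auto simp: mat_trace_def sum_distrib_left intro!: sum.cong)
  then show ?thesis by (auto simp: char_of_def scale_rep_def)
qed

end

section \<open>The module \<open>P\<^sub>j\<close> and its annihilator\<close>

lemma sum_fun_apply: "(\<Sum>a\<in>A. f a) x = (\<Sum>a\<in>A. f a x)"
  by (induction A rule: infinite_finite_induct) auto

lemma e_idem_eq_char_idem: "e_idem G \<psi> s l = (if s \<in> carrier G \<and> l = 0 then char_idem G \<psi> s else 0)"
  unfolding e_idem_def char_idem_def by simp

text \<open>\<open>\<rho>\<close> realises the simple module \<open>V\<^sub>j\<close>; \<open>lam\<close> below is \<open>\<lambda>\<^sub>j\<close>, and \<open>orbit\<close> is \<open>Orb(j)\<close> as a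
  set of characters.\<close>

locale P_module = group G for G :: "('g, 'b) monoid_scheme" (structure) +
  fixes \<chi> :: "'g \<Rightarrow> 'k::field_char_0" and g :: 'g and n d :: nat and \<rho> :: "'g \<Rightarrow> 'k mat"
  assumes fin: "finite (carrier G)" and ac: "alg_closed_field TYPE('k)"
    and chi_nz: "\<forall>s\<in>carrier G. \<chi> s \<noteq> 0"
    and chi_mult: "\<forall>s\<in>carrier G. \<forall>t\<in>carrier G. \<chi> (s \<otimes> t) = \<chi> s * \<chi> t"
    and chi_pow_n: "\<forall>s\<in>carrier G. \<chi> s ^ n = 1"
    and g_carrier: "g \<in> carrier G" and g_central: "\<forall>s\<in>carrier G. g \<otimes> s = s \<otimes> g"
    and n_ge_2: "n \<ge> 2" and irr: "irr_rep G d \<rho>" and lam_ne_1: "gn_scalar G g n d \<rho> \<noteq> 1"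
begin

abbreviation "lam \<equiv> gn_scalar G g n d \<rho>"
abbreviation "orbit \<equiv> Orb \<chi> n (char_of G d \<rho>)"

lemma rep: "is_rep G d \<rho>"
  using irr by (rule irr_rep_is_rep)

lemma chi_one: "\<chi> \<one> = 1"
  using chi_mult chi_nz by (metis one_closed r_one mult_cancel_left1)

lemma chi_pow_n_minus_1: "t \<in> carrier G \<Longrightarrow> inverse (\<chi> t) ^ (n - 1) = \<chi> t"
  using chi_pow_n chi_nz n_ge_2
  by (metis Suc_diff_1 less_le_trans pos2 power_Suc2 inverse_unique mult.commute power_inverse inverse_inverse_eq)

lemma chi_gpow: "\<chi> (g [^] (m::nat)) = \<chi> g ^ m"
  by (induction m) (use chi_one chi_mult g_carrier in auto)

lemma chi_gpow_n: "\<chi> (g [^] n) = 1"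
  using chi_gpow chi_pow_n g_carrier by simp

lemma rep_gpow_n:
  fixes \<rho>' :: "'g \<Rightarrow> 'k mat"
  assumes irr': "irr_rep G d' \<rho>'"
  shows "\<rho>' (g [^] n) = gn_scalar G g n d' \<rho>' \<cdot>\<^sub>m 1\<^sub>m d'"
proof -
  have rep': "is_rep G d' \<rho>'" using irr' by (rule irr_rep_is_rep)
  have "intertwiner G d' d' \<rho>' \<rho>' (\<rho>' (g [^] n))"
    unfolding intertwiner_def
  proof (intro conjI ballI)
    show "\<rho>' (g [^] n) \<in> carrier_mat d' d'" using is_rep_carrier[OF rep'] g_carrier by simp
    fix s assume s: "s \<in> carrier G"
    have "\<rho>' s * \<rho>' (g [^] n) = \<rho>' (s \<otimes> g [^] n)" using is_rep_mult[OF rep' s] g_carrier by simp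
    also have "\<dots> = \<rho>' (g [^] n \<otimes> s)" using group_commutes_pow[of g s n] g_carrier g_central s by simp
    also have "\<dots> = \<rho>' (g [^] n) * \<rho>' s" using is_rep_mult[OF rep' _ s] g_carrier by simp
    finally show "\<rho>' s * \<rho>' (g [^] n) = \<rho>' (g [^] n) * \<rho>' s" .
  qed
  then obtain c where c: "\<rho>' (g [^] n) = c \<cdot>\<^sub>m 1\<^sub>m d'" by (rule irr_rep_commutant_scalar[OF ac irr'])
  have "gn_scalar G g n d' \<rho>' = c"
    unfolding gn_scalar_def
  proof (rule the_equality)
    fix c' assume "\<rho>' (g [^] n) = c' \<cdot>\<^sub>m 1\<^sub>m d'"
    then have "(c' \<cdot>\<^sub>m 1\<^sub>m d') $$ (0, 0) = (c \<cdot>\<^sub>m 1\<^sub>m d') $$ (0, 0)" using c by simp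
    then show "c' = c" using irr_rep_dim_pos[OF irr'] by simp
  qed (rule c)
  then show ?thesis using c by simp
qed

lemma char_gpow_n:
  fixes \<rho>' :: "'g \<Rightarrow> 'k mat"
  assumes "irr_rep G d' \<rho>'"
  shows "char_of G d' \<rho>' (g [^] n) = gn_scalar G g n d' \<rho>' * of_nat d'"
  using rep_gpow_n[OF assms] g_carrier by (simp add: char_of_def mat_trace_smult_one)

lemma gn_scalar_eq_1_iff:
  fixes \<rho>' :: "'g \<Rightarrow> 'k mat"
  assumes "irr_rep G d' \<rho>'"
  shows "gn_scalar G g n d' \<rho>' = 1 \<longleftrightarrow> char_of G d' \<rho>' (g [^] n) = char_of G d' \<rho>' \<one>"
  using char_gpow_n[OF assms] char_of_one[OF irr_rep_is_rep[OF assms]] irr_rep_dim_pos[OF assms] by auto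

lemma Lambda0_eq: "Lambda0 G g n = {\<psi> \<in> (Irr G :: ('g \<Rightarrow> 'k) set). \<psi> (g [^] n) = \<psi> \<one>}"
proof (intro equalityI subsetI)
  fix \<psi> :: "'g \<Rightarrow> 'k" assume "\<psi> \<in> Lambda0 G g n"
  then show "\<psi> \<in> {\<psi> \<in> Irr G. \<psi> (g [^] n) = \<psi> \<one>}"
    unfolding Lambda0_def by (auto simp: gn_scalar_eq_1_iff)
next
  fix \<psi> :: "'g \<Rightarrow> 'k" assume \<psi>: "\<psi> \<in> {\<psi> \<in> Irr G. \<psi> (g [^] n) = \<psi> \<one>}"
  then obtain d' and \<rho>' :: "'g \<Rightarrow> 'k mat" where irr': "irr_rep G d' \<rho>'" and e: "\<psi> = char_of G d' \<rho>'"
    by (blast elim: IrrE)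
  then have "gn_scalar G g n d' \<rho>' = 1" using \<psi> gn_scalar_eq_1_iff by auto
  then show "\<psi> \<in> Lambda0 G g n" using \<psi> irr' e unfolding Lambda0_def by blast
qed

lemma Lambda1_eq: "Lambda1 G g n = {\<psi> \<in> (Irr G :: ('g \<Rightarrow> 'k) set). \<psi> (g [^] n) \<noteq> \<psi> \<one>}"
proof (intro equalityI subsetI)
  fix \<psi> :: "'g \<Rightarrow> 'k" assume "\<psi> \<in> Lambda1 G g n"
  then show "\<psi> \<in> {\<psi> \<in> Irr G. \<psi> (g [^] n) \<noteq> \<psi> \<one>}"
    unfolding Lambda1_def by (auto simp: gn_scalar_eq_1_iff)
next
  fix \<psi> :: "'g \<Rightarrow> 'k" assume \<psi>: "\<psi> \<in> {\<psi> \<in> Irr G. \<psi> (g [^] n) \<noteq> \<psi> \<one>}"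
  then obtain d' and \<rho>' :: "'g \<Rightarrow> 'k mat" where irr': "irr_rep G d' \<rho>'" and e: "\<psi> = char_of G d' \<rho>'"
    by (blast elim: IrrE)
  then have "gn_scalar G g n d' \<rho>' \<noteq> 1" using \<psi> gn_scalar_eq_1_iff by auto
  then show "\<psi> \<in> Lambda1 G g n" using \<psi> irr' e unfolding Lambda1_def by blast
qed

text \<open>The summand \<open>x\<^sup>l V\<^sub>j\<close> of \<open>P\<^sub>j\<close> is the simple \<open>\<Bbbk>G\<close>-module with character \<open>\<chi>\<^sup>-\<^sup>l \<chi>\<^sub>j\<close>.\<close>

definition twist :: "nat \<Rightarrow> 'g \<Rightarrow> 'k mat" where
  "twist l = scale_rep (\<lambda>s. inverse (\<chi> s) ^ l) \<rho>"

lemma twist_irr: "irr_rep G d (twist l)"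
  unfolding twist_def using chi_one chi_mult chi_nz
  by (intro scale_rep_irr[OF irr]) (auto simp: power_mult_distrib)

lemma twist_rep: "is_rep G d (twist l)"
  using twist_irr by (rule irr_rep_is_rep)

lemma char_twist: "char_of G d (twist l) = (\<lambda>s. inverse (\<chi> s) ^ l * char_of G d \<rho> s)"
  unfolding twist_def by (rule char_of_scale_rep[OF rep])

lemma orbit_eq: "orbit = {char_of G d (twist l) | l. l < n}"
  unfolding Orb_def char_twist ..

lemma orbit_subset_Irr: "orbit \<subseteq> Irr G"
  unfolding orbit_eq using twist_irr IrrI by blast

lemma orbit_subset_Lambda1: "orbit \<subseteq> Lambda1 G g n"
  unfolding Lambda1_eq orbit_eq
  using orbit_subset_Irr gn_scalar_eq_1_iff[OF irr] lam_ne_1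
  by (auto simp: orbit_eq char_twist chi_gpow_n chi_one)

lemma sum_e_idem_generator:
  "(\<Sum>\<psi>\<in>Lambda0 G g n. e_idem G \<psi>) + (\<Sum>\<psi>\<in>Lambda1 G g n - orbit. e_idem G \<psi>) =
   (\<Sum>\<psi>\<in>(Irr G :: ('g \<Rightarrow> 'k) set) - orbit. e_idem G \<psi>)"
proof -
  have "Lambda0 G g n \<union> (Lambda1 G g n - orbit) = (Irr G :: ('g \<Rightarrow> 'k) set) - orbit"
    using orbit_subset_Lambda1 unfolding Lambda0_eq Lambda1_eq by auto
  moreover have "finite (Lambda0 G g n :: ('g \<Rightarrow> 'k) set)" "finite (Lambda1 G g n - orbit)"
    using finite_Irr[OF fin ac] unfolding Lambda0_eq Lambda1_eq by auto
  moreover have "Lambda0 G g n \<inter> (Lambda1 G g n - orbit) = {}"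
    unfolding Lambda0_eq Lambda1_eq by auto
  ultimately show ?thesis by (metis sum.union_disjoint)
qed

abbreviation "Z \<equiv> P_z_act n d lam"
abbreviation "S \<equiv> P_g_act \<chi> n d \<rho>"
abbreviation "act \<equiv> P_act G \<chi> n d \<rho> lam"

lemma S_Pcar: "S s w \<in> Pcar n d"
  unfolding Pcar_def P_g_act_def by auto

lemma Z_Pcar: "Z w \<in> Pcar n d"
  unfolding Pcar_def P_z_act_def using n_ge_2 by auto

lemma Zpow_Pcar: "w \<in> Pcar n d \<Longrightarrow> (Z ^^ m) w \<in> Pcar n d"
proof (cases m)
  case (Suc k)
  then show ?thesis using Z_Pcar[of "(Z ^^ k) w"] by simp
qed simp

lemma act_Pcar: "act h w \<in> Pcar n d"
  unfolding Pcar_def P_act_def using S_Pcar unfolding Pcar_def by auto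

lemma PcarD: "w \<in> Pcar n d \<Longrightarrow> n \<le> l \<or> d \<le> i \<Longrightarrow> w l i = 0"
  unfolding Pcar_def by auto

lemma Zpow_apply:
  assumes w: "w \<in> Pcar n d" and m: "m \<le> n"
  shows "(Z ^^ m) w l i = (if l < n \<and> i < d then
      (if m \<le> l then w (l - m) i else (lam - 1) * w (l + n - m) i) else 0)"
  using m
proof (induction m arbitrary: l)
  case 0
  then show ?case using PcarD[OF w] by auto
next
  case (Suc m)
  then show ?case using n_ge_2 by (cases "l = 0") (auto simp: P_z_act_def)
qed

lemma Zpow_n: "w \<in> Pcar n d \<Longrightarrow> (Z ^^ n) w = (\<lambda>l i. (lam - 1) * w l i)"
  by (intro ext) (auto simp: Zpow_apply PcarD)

lemma S_sum: "S s (\<lambda>l i. \<Sum>j\<in>J. f j l i) = (\<lambda>l i. \<Sum>j\<in>J. S s (f j) l i)"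
  unfolding P_g_act_def by (intro ext) (auto simp: sum_distrib_left intro: sum.swap)

lemma S_smult: "S s (\<lambda>l i. c * f l i) = (\<lambda>l i. c * S s f l i)"
  unfolding P_g_act_def by (intro ext) (auto simp: sum_distrib_left mult_ac)

lemma Z_sum: "Z (\<lambda>l i. \<Sum>j\<in>J. f j l i) = (\<lambda>l i. \<Sum>j\<in>J. Z (f j) l i)"
  unfolding P_z_act_def by (intro ext) (auto simp: sum_distrib_left)

lemma Z_smult: "Z (\<lambda>l i. c * f l i) = (\<lambda>l i. c * Z f l i)"
  unfolding P_z_act_def by (intro ext) (auto simp: mult_ac)

lemma Zpow_sum: "(Z ^^ m) (\<lambda>l i. \<Sum>j\<in>J. f j l i) = (\<lambda>l i. \<Sum>j\<in>J. (Z ^^ m) (f j) l i)"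
  by (induction m) (simp_all add: Z_sum)

lemma Zpow_smult: "(Z ^^ m) (\<lambda>l i. c * f l i) = (\<lambda>l i. c * (Z ^^ m) f l i)"
  by (induction m) (simp_all add: Z_smult)

lemma Z_S:
  assumes t: "t \<in> carrier G"
  shows "Z (S t w) = (\<lambda>l i. \<chi> t * S t (Z w) l i)"
proof (intro ext)
  fix l i
  have ct: "\<chi> t \<noteq> 0" using chi_nz t by auto
  show "Z (S t w) l i = \<chi> t * S t (Z w) l i"
  proof (cases "l = 0")
    case True
    then show ?thesis using n_ge_2 chi_pow_n_minus_1[OF t]
      by (auto simp: P_z_act_def P_g_act_def sum_distrib_left mult_ac intro!: sum.cong)
  next
    case False
    then obtain l' where l': "l = Suc l'" by (cases l) auto
    have "\<chi> t * inverse (\<chi> t) ^ Suc l' = inverse (\<chi> t) ^ l'" using ct by (simp add: field_simps)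
    then show ?thesis using l' n_ge_2
      by (auto simp: P_z_act_def P_g_act_def sum_distrib_left mult_ac intro!: sum.cong)
  qed
qed

lemma Zpow_S:
  assumes t: "t \<in> carrier G"
  shows "(Z ^^ a) (S t w) = (\<lambda>l i. \<chi> t ^ a * S t ((Z ^^ a) w) l i)"
proof (induction a)
  case 0 then show ?case by simp
next
  case (Suc a)
  have "(Z ^^ Suc a) (S t w) = Z (\<lambda>l i. \<chi> t ^ a * S t ((Z ^^ a) w) l i)" using Suc by simp
  also have "\<dots> = (\<lambda>l i. \<chi> t ^ a * Z (S t ((Z ^^ a) w)) l i)" by (rule Z_smult)
  also have "\<dots> = (\<lambda>l i. \<chi> t ^ Suc a * S t ((Z ^^ Suc a) w) l i)"
    using Z_S[OF t] by (simp add: mult_ac)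
  finally show ?case .
qed

lemma S_S:
  assumes s: "s \<in> carrier G" and t: "t \<in> carrier G"
  shows "S s (S t w) = S (s \<otimes> t) w"
proof (intro ext)
  fix l i
  show "S s (S t w) l i = S (s \<otimes> t) w l i"
  proof (cases "l < n \<and> i < d")
    case True
    have "S s (S t w) l i = inverse (\<chi> s) ^ l * inverse (\<chi> t) ^ l * (\<Sum>k<d. \<Sum>k'<d. \<rho> s $$ (i, k) * \<rho> t $$ (k, k') * w l k')"
      using True by (simp add: P_g_act_def sum_distrib_left mult_ac)
    also have "(\<Sum>k<d. \<Sum>k'<d. \<rho> s $$ (i, k) * \<rho> t $$ (k, k') * w l k') = (\<Sum>k'<d. \<rho> (s \<otimes> t) $$ (i, k') * w l k')"
      using True s t by (subst sum.swap) (simp add: rep_mult_entry[OF rep] sum_distrib_right)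
    finally show ?thesis using True s t chi_mult by (simp add: P_g_act_def power_mult_distrib mult_ac)
  qed (auto simp: P_g_act_def)
qed

lemma S_gpow_n:
  assumes w: "w \<in> Pcar n d"
  shows "S (g [^] n) w = (\<lambda>l i. lam * w l i)"
proof (intro ext)
  fix l i
  have gn: "\<rho> (g [^] n) = lam \<cdot>\<^sub>m 1\<^sub>m d" by (rule rep_gpow_n[OF irr])
  show "S (g [^] n) w l i = lam * w l i"
  proof (cases "l < n \<and> i < d")
    case True
    have "(\<Sum>k<d. \<rho> (g [^] n) $$ (i, k) * w l k) = (\<Sum>k<d. if k = i then lam * w l i else 0)"
      using True unfolding gn by (intro sum.cong) auto
    then show ?thesis using True chi_gpow_n by (simp add: P_g_act_def)
  qed (use PcarD[OF w] in \<open>auto simp: P_g_act_def\<close>)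
qed

lemma act_sum: "act (\<lambda>u m. \<Sum>p\<in>P. f p u m) w = (\<lambda>l i. \<Sum>p\<in>P. act (f p) w l i)"
proof (intro ext)
  fix l i
  have "act (\<lambda>u m. \<Sum>p\<in>P. f p u m) w l i = (\<Sum>s\<in>carrier G. \<Sum>m<n. \<Sum>p\<in>P. f p s m * S s ((Z ^^ m) w) l i)"
    unfolding P_act_def by (simp add: sum_distrib_right)
  also have "\<dots> = (\<Sum>s\<in>carrier G. \<Sum>p\<in>P. \<Sum>m<n. f p s m * S s ((Z ^^ m) w) l i)"
    by (intro sum.cong refl) (rule sum.swap)
  also have "\<dots> = (\<Sum>p\<in>P. \<Sum>s\<in>carrier G. \<Sum>m<n. f p s m * S s ((Z ^^ m) w) l i)"
    by (rule sum.swap)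
  also have "\<dots> = (\<Sum>p\<in>P. act (f p) w l i)" unfolding P_act_def ..
  finally show "act (\<lambda>u m. \<Sum>p\<in>P. f p u m) w l i = (\<Sum>p\<in>P. act (f p) w l i)" .
qed

lemma act_smult: "act (\<lambda>u m. c * f u m) w = (\<lambda>l i. c * act f w l i)"
  unfolding P_act_def by (intro ext) (simp add: sum_distrib_left mult_ac)

lemma act_diff: "act (\<lambda>u m. f u m - f' u m) w = (\<lambda>l i. act f w l i - act f' w l i)"
  unfolding P_act_def by (intro ext) (simp add: left_diff_distrib sum_subtractf)

lemma act_Hbasis:
  assumes v: "v \<in> carrier G" and k: "k < n"
  shows "act (Hbasis v k) w = S v ((Z ^^ k) w)"
proof (intro ext)
  fix l i
  have "act (Hbasis v k) w l i = (\<Sum>s\<in>carrier G. \<Sum>m<n. if s = v \<and> m = k then S s ((Z ^^ m) w) l i else 0)"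
    unfolding P_act_def Hbasis_def by (intro sum.cong refl) simp
  also have "\<dots> = (\<Sum>s\<in>carrier G. if s = v then (\<Sum>m<n. if m = k then S s ((Z ^^ m) w) l i else 0) else 0)"
    by (intro sum.cong refl) auto
  also have "\<dots> = (\<Sum>m<n. if m = k then S v ((Z ^^ m) w) l i else 0)" using v fin by simp
  also have "\<dots> = S v ((Z ^^ k) w) l i" using k by simp
  finally show "act (Hbasis v k) w l i = S v ((Z ^^ k) w) l i" .
qed

lemma act_Hbasis_prod:
  assumes s: "s \<in> carrier G" and t: "t \<in> carrier G" and a: "a < n" and b: "b < n" and w: "w \<in> Pcar n d"
  shows "act (Hbasis_prod G \<chi> g n s a t b) w = S s ((Z ^^ a) (S t ((Z ^^ b) w)))"
proof -
  have st: "s \<otimes> t \<in> carrier G" using s t by simp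
  have R: "S s ((Z ^^ a) (S t ((Z ^^ b) w))) = (\<lambda>l i. \<chi> t ^ a * S (s \<otimes> t) ((Z ^^ (a + b)) w) l i)"
    by (simp add: Zpow_S[OF t] S_smult S_S[OF s t] funpow_add)
  show ?thesis
  proof (cases "a + b < n")
    case True
    then show ?thesis unfolding R Hbasis_prod_def
      by (simp add: act_smult act_Hbasis[OF st True])
  next
    case False
    define k where "k = a + b - n"
    have k: "k < n" "a + b = k + n" using False a b unfolding k_def by auto
    have Zab: "(Z ^^ (a + b)) w = (\<lambda>l i. (lam - 1) * (Z ^^ k) w l i)"
      unfolding k(2) funpow_add using Zpow_n[OF w] by (simp add: Zpow_smult)
    have gpow_n: "S (s \<otimes> t \<otimes> g [^] n) ((Z ^^ k) w) = (\<lambda>l i. lam * S (s \<otimes> t) ((Z ^^ k) w) l i)"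
      using S_S[OF st nat_pow_closed[OF g_carrier], symmetric] S_gpow_n[OF Zpow_Pcar[OF w]] by (simp add: S_smult)
    have "act (Hbasis_prod G \<chi> g n s a t b) w = (\<lambda>l i. \<chi> t ^ a * (lam * S (s \<otimes> t) ((Z ^^ k) w) l i - S (s \<otimes> t) ((Z ^^ k) w) l i))"
      using False unfolding Hbasis_prod_def k_def[symmetric]
      using nat_pow_closed[OF g_carrier, of n] st by (simp add: act_smult act_diff act_Hbasis[OF _ k(1)] gpow_n)
    also have "\<dots> = S s ((Z ^^ a) (S t ((Z ^^ b) w)))"
      unfolding R Zab S_smult by (simp add: algebra_simps)
    finally show ?thesis .
  qed
qed

lemma act_Hmul:
  assumes w: "w \<in> Pcar n d"
  shows "act (Hmul G \<chi> g n x y) w = act x (act y w)"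
proof -
  have L: "act (Hmul G \<chi> g n x y) w = (\<lambda>l i. \<Sum>s\<in>carrier G. \<Sum>a<n. \<Sum>t\<in>carrier G. \<Sum>b<n.
      x s a * y t b * act (Hbasis_prod G \<chi> g n s a t b) w l i)"
    unfolding Hmul_def by (simp add: act_sum act_smult)
  have R: "act x (act y w) = (\<lambda>l i. \<Sum>s\<in>carrier G. \<Sum>a<n. \<Sum>t\<in>carrier G. \<Sum>b<n.
      x s a * y t b * S s ((Z ^^ a) (S t ((Z ^^ b) w))) l i)"
    unfolding P_act_def[of _ _ _ _ _ _ _ "P_act _ _ _ _ _ _ _ _"]
    by (simp add: P_act_def Zpow_sum S_sum Zpow_smult S_smult sum_distrib_left mult_ac)
  show ?thesis unfolding L R using w by (intro ext sum.cong refl) (simp add: act_Hbasis_prod)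
qed

lemma Hmul_Hcar: "Hmul G \<chi> g n x y \<in> Hcar G n"
  unfolding Hcar_def
proof (intro CollectI allI impI)
  fix u m assume um: "u \<notin> carrier G \<or> n \<le> m"
  show "Hmul G \<chi> g n x y u m = 0"
    unfolding Hmul_def
  proof (intro sum.neutral ballI)
    fix s a t b assume "s \<in> carrier G" "a \<in> {..<n}" "t \<in> carrier G" "b \<in> {..<n}"
    then have "Hbasis_prod G \<chi> g n s a t b u m = 0" using um nat_pow_closed[OF g_carrier, of n]
      by (auto simp: Hbasis_prod_def Hbasis_def)
    then show "x s a * y t b * Hbasis_prod G \<chi> g n s a t b u m = 0" by simp
  qed
qed

lemma act_zero: "act h (\<lambda>l i. 0) = (\<lambda>l i. 0)"
proof -
  have Zpow_0: "(Z ^^ m) 0 = 0" for m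
  proof (induction m)
    case (Suc m)
    then show ?case by (intro ext) (simp add: P_z_act_def)
  qed simp
  have "S s 0 = 0" for s unfolding P_g_act_def by (intro ext) simp
  then have "act h 0 = 0" unfolding P_act_def Zpow_0 by (intro ext) simp
  then show ?thesis by (simp add: zero_fun_def)
qed

definition gen_fun :: "'g \<Rightarrow> 'k" where
  "gen_fun s = (\<Sum>\<psi>\<in>(Irr G :: ('g \<Rightarrow> 'k) set) - orbit. char_idem G \<psi> s)"

text \<open>The generator \<open>E\<close> lies in \<open>\<Bbbk>G \<subseteq> H\<close>; \<^const>\<open>gen_fun\<close> is \<open>E\<close> as a function on \<open>G\<close>.\<close>

abbreviation "gen \<equiv> (\<Sum>\<psi>\<in>(Irr G :: ('g \<Rightarrow> 'k) set) - orbit. e_idem G \<psi>)"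

lemma gen_apply: "gen s m = (if s \<in> carrier G \<and> m = 0 then gen_fun s else 0)"
  unfolding sum_fun_apply gen_fun_def by (auto simp: e_idem_eq_char_idem)

lemma gen_Hcar: "gen \<in> Hcar G n"
  unfolding Hcar_def using gen_apply n_ge_2 by auto

lemma S_apply_twist:
  assumes "s \<in> carrier G" "l < n" "i < d"
  shows "S s w l i = (\<Sum>k<d. twist l s $$ (i, k) * w l k)"
  using assms is_rep_carrier[OF rep assms(1)]
  by (auto simp: P_g_act_def twist_def scale_rep_def sum_distrib_left mult.assoc intro!: sum.cong)

lemma rep_lin_twist_gen_fun:
  assumes l: "l < n"
  shows "rep_lin G d (twist l) gen_fun = 0\<^sub>m d d"
proof (rule eq_matI)
  fix i k assume "i < dim_row (0\<^sub>m d d :: 'k mat)" "k < dim_col (0\<^sub>m d d :: 'k mat)"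
  then have i: "i < d" and k: "k < d" by auto
  have "rep_lin G d (twist l) gen_fun $$ (i, k) =
      (\<Sum>\<psi>\<in>Irr G - orbit. rep_lin G d (twist l) (char_idem G \<psi>) $$ (i, k))"
    unfolding gen_fun_def
    using index_rep_lin_sum[OF i k, where c = "\<lambda>_. 1" and f = "char_idem G" and P = "Irr G - orbit"]
    by simp
  also have "\<dots> = 0"
  proof (intro sum.neutral ballI)
    fix \<psi> :: "'g \<Rightarrow> 'k" assume \<psi>: "\<psi> \<in> Irr G - orbit"
    then obtain d0 and \<rho>0 :: "'g \<Rightarrow> 'k mat" where irr0: "irr_rep G d0 \<rho>0" and e: "\<psi> = char_of G d0 \<rho>0"
      by (auto elim: IrrE)
    have "\<psi> \<noteq> char_of G d (twist l)" using \<psi> l unfolding orbit_eq by auto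
    then show "rep_lin G d (twist l) (char_idem G \<psi>) $$ (i, k) = 0"
      using i k unfolding e by (simp add: rep_lin_char_idem[OF fin ac irr0 twist_irr])
  qed
  finally show "rep_lin G d (twist l) gen_fun $$ (i, k) = 0\<^sub>m d d $$ (i, k)" using i k by simp
qed auto

lemma act_gen: "act gen w = 0"
proof (intro ext)
  fix l i
  have "act gen w l i = (\<Sum>s\<in>carrier G. gen_fun s * S s w l i)"
    unfolding P_act_def using n_ge_2 by (simp add: gen_apply if_distrib[of "\<lambda>x. x * _"] cong: if_cong)
  also have "\<dots> = 0"
  proof (cases "l < n \<and> i < d")
    case True
    have "(\<Sum>s\<in>carrier G. gen_fun s * S s w l i) =
        (\<Sum>k<d. rep_lin G d (twist l) gen_fun $$ (i, k) * w l k)"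
      using True by (simp add: S_apply_twist rep_lin_def sum_distrib_left sum_distrib_right mult_ac
          sum.swap[of _ "carrier G"])
    then show ?thesis using True by (simp add: rep_lin_twist_gen_fun)
  qed (auto simp: P_g_act_def)
  finally show "act gen w l i = 0 l i" by simp
qed

lemma ideal_gen_subset_annihilator: "ideal_gen G \<chi> g n gen \<subseteq> annihilator G \<chi> n d \<rho> lam"
proof
  fix x assume "x \<in> ideal_gen G \<chi> g n gen"
  then show "x \<in> annihilator G \<chi> n d \<rho> lam"
    unfolding annihilator_def
  proof (induction rule: ideal_gen.induct)
    case gen
    show ?case using gen_Hcar act_gen by (auto simp: fun_eq_iff)
  next
    case zero
    show ?case by (auto simp: Hcar_def P_act_def)
  next
    case (add x y)
    then show ?case by (auto simp: Hcar_def P_act_def distrib_right sum.distrib fun_eq_iff)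
  next
    case (lmul h x)
    then show ?case using Hmul_Hcar act_Hmul act_zero by auto
  next
    case (rmul h x)
    then show ?case using Hmul_Hcar act_Hmul act_Pcar by auto
  qed
qed

definition in_degree :: "nat \<Rightarrow> 'k vec \<Rightarrow> nat \<Rightarrow> nat \<Rightarrow> 'k" where
  "in_degree k v = (\<lambda>l i. if l = k \<and> i < d then v $ i else 0)"

lemma in_degree_Pcar: "k < n \<Longrightarrow> in_degree k v \<in> Pcar n d"
  unfolding in_degree_def Pcar_def by auto

text \<open>A vector placed in degree \<open>l - m\<close> (mod \<open>n\<close>) reaches degree \<open>l\<close> only through \<open>z\<^sup>m\<close>,
  so the degree-\<open>l\<close> component of \<open>h\<close> applied to it involves only the coefficients \<open>h (-) m\<close>.\<close>

lemma act_in_degree: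
  assumes l: "l < n" and m: "m < n" and v: "v \<in> carrier_vec d" and i: "i < d"
  defines "k \<equiv> if m \<le> l then l - m else l + n - m"
  shows "act h (in_degree k v) l i =
    (if m \<le> l then 1 else lam - 1) * (rep_lin G d (twist l) (\<lambda>s. h s m) *\<^sub>v v) $ i"
proof -
  define c where "c = (if m \<le> l then 1 else lam - 1)"
  have k: "k < n" using l m unfolding k_def by auto
  have Zw: "(Z ^^ m') (in_degree k v) l j = (if m' = m then c * v $ j else 0)"
    if m': "m' < n" and j: "j < d" for m' j
  proof -
    have "\<not> (m' \<le> l \<and> l - m' = k)" "\<not> (\<not> m' \<le> l \<and> l + n - m' = k)" if "m' \<noteq> m"
      using that l m m' unfolding k_def by auto
    then show ?thesis
      using Zpow_apply[OF in_degree_Pcar[OF k], where m = m' and l = l and i = j] m' l m j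
      by (auto simp: in_degree_def k_def c_def)
  qed
  have "act h (in_degree k v) l i = (\<Sum>s\<in>carrier G. h s m * (c * (twist l s *\<^sub>v v) $ i))"
  proof -
    have "S s ((Z ^^ m') (in_degree k v)) l i = (if m' = m then c * (twist l s *\<^sub>v v) $ i else 0)"
      if s: "s \<in> carrier G" and m': "m' < n" for s m'
      using i v s l m' Zw index_mult_mat_vec_sum[OF is_rep_carrier[OF twist_rep[of l] s] v i]
      by (simp add: S_apply_twist sum_distrib_left mult_ac)
    then show ?thesis
      unfolding P_act_def using m by (simp add: if_distrib[of "\<lambda>x. _ * x"] cong: if_cong)
  qed
  also have "\<dots> = c * (rep_lin G d (twist l) (\<lambda>s. h s m) *\<^sub>v v) $ i"
    using v i is_rep_carrier[OF twist_rep]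
    by (subst index_rep_lin_mult_vec[where \<rho> = "twist l"]) (auto simp: sum_distrib_left mult_ac)
  finally show ?thesis unfolding c_def .
qed

lemma annihilator_rep_lin_twist:
  assumes h: "h \<in> annihilator G \<chi> n d \<rho> lam" and l: "l < n" and m: "m < n"
  shows "rep_lin G d (twist l) (\<lambda>s. h s m) = 0\<^sub>m d d"
proof (rule eq_mat_on_vecsI)
  fix v :: "'k vec" assume v: "v \<in> carrier_vec d"
  define k where "k = (if m \<le> l then l - m else l + n - m)"
  have "in_degree k v \<in> Pcar n d" using l m unfolding k_def by (intro in_degree_Pcar) auto
  then have zero: "act h (in_degree k v) l i = 0" for i
    using h unfolding annihilator_def by (auto simp: fun_eq_iff)
  show "rep_lin G d (twist l) (\<lambda>s. h s m) *\<^sub>v v = 0\<^sub>m d d *\<^sub>v v"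
  proof (rule eq_vecI)
    fix i assume "i < dim_vec (0\<^sub>m d d *\<^sub>v v)"
    then have i: "i < d" by simp
    have "(if m \<le> l then 1 else lam - 1) * (rep_lin G d (twist l) (\<lambda>s. h s m) *\<^sub>v v) $ i = 0"
      using act_in_degree[OF l m v i, where h = h] zero unfolding k_def by simp
    then show "(rep_lin G d (twist l) (\<lambda>s. h s m) *\<^sub>v v) $ i = (0\<^sub>m d d *\<^sub>v v) $ i"
      using lam_ne_1 i v by (auto split: if_splits)
  qed (use v in simp)
qed auto

text \<open>By completeness \<open>h (-) m = \<Sum>\<^sub>\<psi> e\<^sub>\<psi> * h (-) m\<close>, and the summands with \<open>\<psi>\<close> in the orbit
  vanish because \<open>h (-) m\<close> acts as zero on every twist.\<close>

lemma annihilator_coeff_conv: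
  assumes h: "h \<in> annihilator G \<chi> n d \<rho> lam" and m: "m < n" and u: "u \<in> carrier G"
  shows "h u m = group_conv G gen_fun (\<lambda>s. h s m) u"
proof -
  let ?a = "\<lambda>s. h s m"
  let ?I = "Irr G :: ('g \<Rightarrow> 'k) set"
  have "h u m = group_conv G (delta_one G) ?a u" by (rule group_conv_delta_one_left[OF fin u, symmetric])
  also have "\<dots> = group_conv G (\<lambda>x. \<Sum>\<psi>\<in>?I. char_idem G \<psi> x) ?a u"
    using sum_char_idem_Irr[OF fin ac] by (intro group_conv_cong_left) auto
  also have "\<dots> = (\<Sum>\<psi>\<in>?I - orbit. group_conv G (char_idem G \<psi>) ?a u) +
      (\<Sum>\<psi>\<in>orbit. group_conv G (char_idem G \<psi>) ?a u)"
    unfolding group_conv_sum_left using finite_Irr[OF fin ac] orbit_subset_Irr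
    by (metis add.commute sum.subset_diff)
  also have "(\<Sum>\<psi>\<in>orbit. group_conv G (char_idem G \<psi>) ?a u) = 0"
  proof (intro sum.neutral ballI)
    fix \<psi> assume "\<psi> \<in> orbit"
    then obtain l where l: "l < n" "\<psi> = char_of G d (twist l)" unfolding orbit_eq by auto
    have "0\<^sub>m d d * twist l (inv u) = 0\<^sub>m d d"
      using is_rep_carrier[OF twist_rep[of l] inv_closed[OF u]] by (intro eq_matI) (auto simp: scalar_prod_def)
    then show "group_conv G (char_idem G \<psi>) ?a u = 0"
      unfolding l(2) group_conv_char_idem_left[OF twist_rep u] annihilator_rep_lin_twist[OF h l(1) m]
      by (simp add: mat_trace_def)
  qed
  also have "(\<Sum>\<psi>\<in>?I - orbit. group_conv G (char_idem G \<psi>) ?a u) = group_conv G gen_fun ?a u"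
    unfolding gen_fun_def[abs_def] by (rule group_conv_sum_left[symmetric])
  finally show ?thesis by simp
qed

lemma Hmul_gen_apply:
  "Hmul G \<chi> g n gen h u m = (if m < n \<and> u \<in> carrier G then group_conv G gen_fun (\<lambda>s. h s m) u else 0)"
proof -
  have inner: "(\<Sum>a<n. \<Sum>t\<in>carrier G. \<Sum>b<n. gen s a * h t b * Hbasis_prod G \<chi> g n s a t b u m) =
      (\<Sum>t\<in>carrier G. if m < n \<and> u = s \<otimes> t then gen_fun s * h t m else 0)" if s: "s \<in> carrier G" for s
  proof -
    have "(\<Sum>a<n. \<Sum>t\<in>carrier G. \<Sum>b<n. gen s a * h t b * Hbasis_prod G \<chi> g n s a t b u m) =
        (\<Sum>a<n. if a = 0 then (\<Sum>t\<in>carrier G. \<Sum>b<n. gen_fun s * h t b * Hbasis_prod G \<chi> g n s 0 t b u m)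
          else 0)"
      using s by (intro sum.cong refl) (auto simp: gen_apply)
    also have "\<dots> = (\<Sum>t\<in>carrier G. \<Sum>b<n. gen_fun s * h t b * Hbasis_prod G \<chi> g n s 0 t b u m)"
      using n_ge_2 by simp
    also have "\<dots> = (\<Sum>t\<in>carrier G. \<Sum>b<n. if b = m \<and> u = s \<otimes> t then gen_fun s * h t m else 0)"
      by (intro sum.cong refl) (auto simp: Hbasis_prod_def Hbasis_def)
    also have "\<dots> = (\<Sum>t\<in>carrier G. if m < n \<and> u = s \<otimes> t then gen_fun s * h t m else 0)"
      by (intro sum.cong refl) (auto simp: sum.delta)
    finally show ?thesis .
  qed
  have "Hmul G \<chi> g n gen h u m =
      (\<Sum>s\<in>carrier G. \<Sum>t\<in>carrier G. if m < n \<and> u = s \<otimes> t then gen_fun s * h t m else 0)"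
    unfolding Hmul_def using inner by (intro sum.cong refl) auto
  also have "\<dots> = (if m < n \<and> u \<in> carrier G then group_conv G gen_fun (\<lambda>s. h s m) u else 0)"
  proof (cases "m < n \<and> u \<in> carrier G")
    case True
    have "u = s \<otimes> t \<longleftrightarrow> t = inv s \<otimes> u" if "s \<in> carrier G" "t \<in> carrier G" for s t
      using that True by (auto simp: m_assoc[symmetric])
    then have "(\<Sum>s\<in>carrier G. \<Sum>t\<in>carrier G. if m < n \<and> u = s \<otimes> t then gen_fun s * h t m else 0) =
        (\<Sum>s\<in>carrier G. gen_fun s * h (inv s \<otimes> u) m)"
      using True fin by (intro sum.cong refl) (simp add: if_distrib cong: if_cong)
    then show ?thesis using True by (simp add: group_conv_def)
  qed (auto intro!: sum.neutral)
  finally show ?thesis .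
qed

lemma annihilator_Hmul_gen:
  assumes h: "h \<in> annihilator G \<chi> n d \<rho> lam"
  shows "Hmul G \<chi> g n gen h = h"
proof (intro ext)
  fix u m
  have "h u m = 0" if "\<not> (m < n \<and> u \<in> carrier G)"
    using h that unfolding annihilator_def Hcar_def by auto
  then show "Hmul G \<chi> g n gen h u m = h u m"
    using annihilator_coeff_conv[OF h] by (auto simp: Hmul_gen_apply)
qed

theorem annihilator_eq_ideal_gen: "annihilator G \<chi> n d \<rho> lam = ideal_gen G \<chi> g n gen"
proof
  show "annihilator G \<chi> n d \<rho> lam \<subseteq> ideal_gen G \<chi> g n gen"
  proof
    fix h assume h: "h \<in> annihilator G \<chi> n d \<rho> lam"
    then have "Hmul G \<chi> g n gen h \<in> ideal_gen G \<chi> g n gen"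
      unfolding annihilator_def by (blast intro: ideal_gen.rmul ideal_gen.gen)
    then show "h \<in> ideal_gen G \<chi> g n gen" using annihilator_Hmul_gen[OF h] by simp
  qed
qed (rule ideal_gen_subset_annihilator)

end

theorem theorem4p4:
  fixes G :: "('g, 'b) monoid_scheme" and \<chi> :: "'g \<Rightarrow> 'k::field_char_0"
    and g :: 'g and n d :: nat and \<rho> :: "'g \<Rightarrow> 'k mat"
  assumes "alg_closed_field TYPE('k)"
    and "group G" and "finite (carrier G)"
    and "\<forall>s\<in>carrier G. \<chi> s \<noteq> 0"
    and "\<forall>s\<in>carrier G. \<forall>t\<in>carrier G. \<chi> (s \<otimes>\<^bsub>G\<^esub> t) = \<chi> s * \<chi> t"
    and "\<forall>s\<in>carrier G. \<chi> s ^ n = 1"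
    and "g \<in> carrier G" and "\<forall>s\<in>carrier G. g \<otimes>\<^bsub>G\<^esub> s = s \<otimes>\<^bsub>G\<^esub> g"
    and "g [^]\<^bsub>G\<^esub> n \<noteq> \<one>\<^bsub>G\<^esub>"
    and "n \<ge> 2" and "\<chi> g ^ n = 1" and "\<forall>m. 0 < m \<and> m < n \<longrightarrow> \<chi> g ^ m \<noteq> 1"
    and "irr_rep G d \<rho>" and "gn_scalar G g n d \<rho> \<noteq> 1"
  shows "annihilator G \<chi> n d \<rho> (gn_scalar G g n d \<rho>) =
         ideal_gen G \<chi> g n
           ((\<Sum>\<psi>\<in>Lambda0 G g n. e_idem G \<psi>) +
            (\<Sum>\<psi>\<in>Lambda1 G g n - Orb \<chi> n (char_of G d \<rho>). e_idem G \<psi>))"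
proof -
  interpret P_module G \<chi> g n d \<rho>
    by (intro P_module.intro P_module_axioms.intro) (use assms in auto)
  show ?thesis using annihilator_eq_ideal_gen sum_e_idem_generator by simp
qed

end
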